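(* Let $k$ be a field of characteristic zero and $m$ a positive integer. Let $D_m = k_{+}\{x\}/[x^m]$ and let $\bar{x}$ denote the image of $x$ in $D_m$. Let $V_m$ be the $k$-vector space with basis $\{\xi_i^l, \eta_i^l : l = 0,\dots,m-2,\ i\in\mathbb{Z}_{\geqslant 0}\}$, and let $\Lambda_0(V_m)$ be the even part of the Grassmann algebra of $V_m$ without unity, equipped with the derivation determined by $(\xi_i^l)' = \xi_{i+1}^l$, $(\eta_i^l)' = \eta_{i+1}^l$. Then there is a homomorphism of differential algebras $\varphi_m\colon D_m\to\Lambda_0(V_m)$ with $\varphi_m(\bar{x}) = \sum_{l=0}^{m-2}\xi_0^l\wedge\eta_0^l$, and $\varphi_m$ is injective.
   Context: $k\{x\}$ denotes the differential polynomial algebra in one indeterminate: the polynomial algebra $k[x_0,x_1,x_2,\dots]$ (with $x = x_0$) with the $k$-linear derivation satisfying $x_n' = x_{n+1}$. $k_{+}\{x\}$ is the subalgebra (without unity) of differential polynomials with zero constant term. A differential ideal is an ideal $I$ with $I'\subseteq I$; $[x^m]$ denotes the differential ideal of $k_{+}\{x\}$ generated by $x^m$. The Grassmann algebra $\Lambda(V_m)$ is taken without unity (i.e. it is the span of exterior products of positive degree), $\Lambda_0(V_m)$ is its component of (positive) even degree, and the derivation on $\Lambda(V_m)$ is the ordinary (not super) derivation extending the given action on basis vectors by the Leibniz rule, i.e. $(u_1\wedge\cdots\wedge u_n)' = \sum_{j} u_1\wedge\cdots\wedge u_j'\wedge\cdots\wedge u_n$; $\Lambda_0(V_m)$ is closed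 under it. *)

theory Defs
  imports "HOL-Library.Poly_Mapping" "HOL-Library.Product_Lexorder"
begin

text \<open>k{x} = k[x_0,x_1,...]: a monomial is a finitely supported exponent vector nat =>0 nat,
  a polynomial a finitely supported coefficient function on monomials.\<close>

type_synonym 'k dpoly = "(nat \<Rightarrow>\<^sub>0 nat) \<Rightarrow>\<^sub>0 'k"

definition dvar :: "nat \<Rightarrow> 'k::comm_ring_1 dpoly" where
  "dvar n = Poly_Mapping.single (Poly_Mapping.single n 1) 1"

definition dscal :: "'k::comm_ring_1 \<Rightarrow> 'k dpoly \<Rightarrow> 'k dpoly" where
  "dscal c p = Poly_Mapping.single 0 c * p"

definition kplus :: "'k::comm_ring_1 dpoly set" where
  "kplus = {p. Poly_Mapping.lookup p 0 = 0}"

text \<open>the k-linear derivation with x_n' = x_(n+1)\<close>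
definition dderiv :: "'k::comm_ring_1 dpoly \<Rightarrow> 'k dpoly" where
  "dderiv p = (\<Sum>\<mu>\<in>Poly_Mapping.keys p. \<Sum>i\<in>Poly_Mapping.keys \<mu>.
      Poly_Mapping.single (\<mu> - Poly_Mapping.single i 1 + Poly_Mapping.single (Suc i) 1)
        (Poly_Mapping.lookup p \<mu> * of_nat (Poly_Mapping.lookup \<mu> i)))"

definition diff_ideal_gen :: "nat \<Rightarrow> 'k::comm_ring_1 dpoly set" where
  "diff_ideal_gen m = \<Inter>{I. I \<subseteq> kplus \<and> dvar 0 ^ m \<in> I \<and> 0 \<in> I
      \<and> (\<forall>p\<in>I. \<forall>q\<in>I. p + q \<in> I)
      \<and> (\<forall>c. \<forall>p\<in>I. dscal c p \<in> I)
      \<and> (\<forall>p\<in>I. \<forall>q\<in>kplus. q * p \<in> I)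
      \<and> (\<forall>p\<in>I. dderiv p \<in> I)}"

text \<open>An element of the Grassmann algebra over a vector space with linearly ordered basis 'a
  is a finitely supported combination of the basis monomials e_S = u_s1 /\ ... /\ u_sn,
  S = {s1 < ... < sn} finite.\<close>

definition perm_sign :: "'a::linorder list \<Rightarrow> 'k::comm_ring_1" where
  "perm_sign xs = (-1) ^ card {(i, j). i < j \<and> j < length xs \<and> xs ! j < xs ! i}"

text \<open>c * (u_x1 /\ ... /\ u_xn) for an arbitrary list of basis vectors\<close>
definition ext_term :: "'k::comm_ring_1 \<Rightarrow> 'a::linorder list \<Rightarrow> ('a set \<Rightarrow>\<^sub>0 'k)" where
  "ext_term c xs = (if distinct xs then Poly_Mapping.single (set xs) (c * perm_sign xs) else 0)"

definition gscal :: "'k::comm_ring_1 \<Rightarrow> ('a set \<Rightarrow>\<^sub>0 'k) \<Rightarrow> ('a set \<Rightarrow>\<^sub>0 'k)" where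
  "gscal c p = Poly_Mapping.map (\<lambda>a. c * a) p"

definition wedge :: "('a::linorder set \<Rightarrow>\<^sub>0 'k::comm_ring_1) \<Rightarrow> ('a set \<Rightarrow>\<^sub>0 'k) \<Rightarrow> ('a set \<Rightarrow>\<^sub>0 'k)" where
  "wedge p q = (\<Sum>S\<in>Poly_Mapping.keys p. \<Sum>T\<in>Poly_Mapping.keys q.
      ext_term (Poly_Mapping.lookup p S * Poly_Mapping.lookup q T) (sorted_list_of_set S @ sorted_list_of_set T))"

text \<open>ordinary (non-super) derivation induced by a map sh on basis vectors:
  (u_1 /\ ... /\ u_n)' = sum_j u_1 /\ ... /\ sh u_j /\ ... /\ u_n\<close>
definition gderiv :: "('a::linorder \<Rightarrow> 'a) \<Rightarrow> ('a set \<Rightarrow>\<^sub>0 'k::comm_ring_1) \<Rightarrow> ('a set \<Rightarrow>\<^sub>0 'k)" where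
  "gderiv sh p = (\<Sum>S\<in>Poly_Mapping.keys p. \<Sum>j<card S.
      ext_term (Poly_Mapping.lookup p S) ((sorted_list_of_set S)[j := sh (sorted_list_of_set S ! j)]))"

text \<open>Basis index (l, i, False) stands for xi_i^l and (l, i, True) for eta_i^l.\<close>
type_synonym gidx = "nat \<times> nat \<times> bool"
type_synonym 'k grass = "gidx set \<Rightarrow>\<^sub>0 'k"

definition xi :: "nat \<Rightarrow> nat \<Rightarrow> gidx" where "xi l i = (l, i, False)"
definition eta :: "nat \<Rightarrow> nat \<Rightarrow> gidx" where "eta l i = (l, i, True)"

definition shift :: "gidx \<Rightarrow> gidx" where "shift = (\<lambda>(l, i, b). (l, Suc i, b))"

definition basis_V :: "nat \<Rightarrow> gidx set" where
  "basis_V m = {(l, i, b). Suc l < m}"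

definition gen :: "gidx \<Rightarrow> 'k::comm_ring_1 grass" where
  "gen a = Poly_Mapping.single {a} 1"

definition Lambda0 :: "nat \<Rightarrow> 'k::comm_ring_1 grass set" where
  "Lambda0 m = {p. \<forall>S\<in>Poly_Mapping.keys p. finite S \<and> S \<subseteq> basis_V m \<and> even (card S) \<and> S \<noteq> {}}"

definition omega :: "nat \<Rightarrow> 'k::comm_ring_1 grass" where
  "omega m = (\<Sum>l<m - 1. wedge (gen (xi l 0)) (gen (eta l 0)))"

end

theory Submission
  imports Defs "HOL-Library.FuncSet"
begin

text \<open>
  Let \<open>\<omega> = \<Sum>\<^sub>l \<xi>\<^sub>0\<^sup>l \<and> \<eta>\<^sub>0\<^sup>l\<close>. The even part of the Grassmann algebra is commutative, so
  \<open>x\<^sub>n \<mapsto> \<omega>\<^sup>(\<^sup>n\<^sup>) = \<Sum>\<^sub>l \<Sum>\<^sub>a (n choose a) \<xi>\<^sub>a\<^sup>l \<and> \<eta>\<^sub>n\<^sub>-\<^sub>a\<^sup>l\<close> extends to a differential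
  homomorphism \<open>\<phi>\<close> on \<open>k{x}\<close>. As \<open>\<omega>\<close> is a sum of \<open>m - 1\<close> elements of square zero,
  \<open>\<omega>\<^sup>m = 0\<close>, so \<open>[x\<^sup>m]\<close> lies in the kernel.

  Conversely, give the monomial \<open>x\<^sup>\<mu>\<close> the weight \<open>\<Sum> n \<mu>\<^sub>n\<close> and the square weight
  \<open>\<Sum> n\<^sup>2 \<mu>\<^sub>n\<close>. Among the monomials of \<open>(x\<^sup>m)\<^sup>(\<^sup>N\<^sup>)\<close> the most balanced one has the
  least square weight and a positive integer coefficient, so modulo \<open>[x\<^sup>m]\<close> every monomial
  is a combination of standard ones, those with \<open>\<mu>\<^sub>a + \<mu>\<^sub>a\<^sub>+\<^sub>1 < m\<close> for all \<open>a\<close>.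
  For standard \<open>\<mu>\<close>, distributing the factors of \<open>x\<^sup>\<mu>\<close> cyclically over the \<open>m - 1\<close>
  colours \<open>l\<close> yields a basis monomial of \<open>\<Lambda>\<^sub>0\<close> occurring in \<open>\<phi>(x\<^sup>\<mu>)\<close> with
  coefficient \<open>\<plusminus>\<close> a positive integer, but in no \<open>\<phi>(x\<^sup>\<nu>)\<close> with \<open>\<nu> \<noteq> \<mu>\<close> of at least
  the same square weight; this is a rearrangement inequality for \<open>\<Sum> (a + b)\<^sup>2\<close>. Hence
  the images of the standard monomials are linearly independent.
\<close>

lemma poly_mapping_sum_single: "(p::'a \<Rightarrow>\<^sub>0 'b::comm_monoid_add) = (\<Sum>k\<in>Poly_Mapping.keys p. Poly_Mapping.single k (Poly_Mapping.lookup p k))"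
proof (rule poly_mapping_eqI)
  fix x
  have "Poly_Mapping.lookup (\<Sum>k\<in>Poly_Mapping.keys p. Poly_Mapping.single k (Poly_Mapping.lookup p k)) x
      = (\<Sum>k\<in>Poly_Mapping.keys p. (Poly_Mapping.lookup p k when k = x))"
    by (simp add: lookup_sum lookup_single)
  also have "\<dots> = Poly_Mapping.lookup p x"
    by (cases "x \<in> Poly_Mapping.keys p") (auto simp: when_def in_keys_iff)
  finally show "Poly_Mapping.lookup p x = Poly_Mapping.lookup (\<Sum>k\<in>Poly_Mapping.keys p. Poly_Mapping.single k (Poly_Mapping.lookup p k)) x" by simp
qed

lemma poly_mapping_induct_keys[case_names zero single add]:
  assumes "P 0" "\<And>k a. k \<in> Poly_Mapping.keys p \<Longrightarrow> P (Poly_Mapping.single k a)"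
    "\<And>q r. P q \<Longrightarrow> P r \<Longrightarrow> P (q + r)"
  shows "P (p::'a \<Rightarrow>\<^sub>0 'b::comm_monoid_add)"
proof -
  have "\<And>A. finite A \<Longrightarrow> A \<subseteq> Poly_Mapping.keys p \<Longrightarrow> P (\<Sum>k\<in>A. Poly_Mapping.single k (Poly_Mapping.lookup p k))"
  proof -
    fix A :: "'a set" assume "finite A" "A \<subseteq> Poly_Mapping.keys p"
    then show "P (\<Sum>k\<in>A. Poly_Mapping.single k (Poly_Mapping.lookup p k))"
      by (induction A rule: finite_induct) (auto intro: assms)
  qed
  then show ?thesis by (subst poly_mapping_sum_single) simp
qed

lemma sum_keys_lookup_add:
  assumes "\<And>k. f k 0 = 0" "\<And>k a b. f k (a+b) = f k a + f k b"
  shows "(\<Sum>k\<in>Poly_Mapping.keys (p+q). f k (Poly_Mapping.lookup (p+q) k))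
    = (\<Sum>k\<in>Poly_Mapping.keys p. f k (Poly_Mapping.lookup p k)) + (\<Sum>k\<in>Poly_Mapping.keys q. f k (Poly_Mapping.lookup q k))"
  by (rule setsum_keys_plus_distrib) (use assms in auto)

lemma sum_keys_lookup_single:
  assumes "f k 0 = 0"
  shows "(\<Sum>j\<in>Poly_Mapping.keys (Poly_Mapping.single k a). f j (Poly_Mapping.lookup (Poly_Mapping.single k a) j)) = f k a"
  using assms by (cases "a = 0") auto

lemma keys_add_nat: "Poly_Mapping.keys (\<mu> + \<nu>) = Poly_Mapping.keys \<mu> \<union> Poly_Mapping.keys (\<nu> :: nat \<Rightarrow>\<^sub>0 nat)"
  by (auto simp: in_keys_iff lookup_add)

lemma poly_mapping_diff_add:
  assumes "\<And>k. Poly_Mapping.lookup \<beta> k \<le> Poly_Mapping.lookup \<mu> k"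
  shows "\<mu> = (\<mu> - \<beta>) + (\<beta> :: nat \<Rightarrow>\<^sub>0 nat)"
  using assms by (intro poly_mapping_eqI) (simp add: lookup_add lookup_minus)

lemma poly_mapping_nat_add_eq_0D: "(a :: nat \<Rightarrow>\<^sub>0 nat) + b = 0 \<Longrightarrow> a = 0"
  by (metis add_is_0 lookup_add lookup_zero poly_mapping_eqI)

section \<open>Signs of permutations\<close>

definition inversions :: "'a::linorder list \<Rightarrow> nat" where
  "inversions xs = card {(i, j). i < j \<and> j < length xs \<and> xs ! j < xs ! i}"

definition cross_inversions :: "'a::linorder list \<Rightarrow> 'a list \<Rightarrow> nat" where
  "cross_inversions xs ys = card {(i, j). i < length xs \<and> j < length ys \<and> ys ! j < xs ! i}"

definition set_inversions :: "'a::linorder set \<Rightarrow> 'a set \<Rightarrow> nat" where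
  "set_inversions X Y = card {(x, y). x \<in> X \<and> y \<in> Y \<and> y < x}"

lemma perm_sign_inversions: "perm_sign xs = (-1) ^ inversions xs"
  by (simp add: perm_sign_def inversions_def)

lemma inversion_pairs_append:
  "{(i, j). i < j \<and> j < length (xs @ ys) \<and> (xs @ ys) ! j < (xs @ ys) ! i} =
     {(i, j). i < j \<and> j < length xs \<and> xs ! j < xs ! i}
   \<union> (\<lambda>(i, j). (i + length xs, j + length xs)) ` {(i, j). i < j \<and> j < length ys \<and> ys ! j < ys ! i}
   \<union> (\<lambda>(i, j). (i, j + length xs)) ` {(i, j). i < length xs \<and> j < length ys \<and> ys ! j < xs ! (i::nat)}"
  (is "?L = ?A \<union> ?B \<union> ?C")
proof (intro set_eqI iffI)
  fix z assume "z \<in> ?L"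
  then obtain i j where z: "z = (i, j)" "i < j" "j < length xs + length ys"
    and lt: "(xs @ ys) ! j < (xs @ ys) ! i" by auto
  consider "j < length xs" | "i < length xs" "length xs \<le> j" | "length xs \<le> i" by linarith
  then show "z \<in> ?A \<union> ?B \<union> ?C"
  proof cases
    case 1 then show ?thesis using z lt by (auto simp: nth_append)
  next
    case 2
    then have "(i, j - length xs) \<in> {(i, j). i < length xs \<and> j < length ys \<and> ys ! j < xs ! i}"
      using z lt by (auto simp: nth_append)
    then have "z \<in> ?C" by (rule rev_image_eqI) (use z 2 in simp)
    then show ?thesis by blast
  next
    case 3
    then have "(i - length xs, j - length xs) \<in> {(i, j). i < j \<and> j < length ys \<and> ys ! j < ys ! i}"
      using z lt by (auto simp: nth_append)
    then have "z \<in> ?B" by (rule rev_image_eqI) (use z 3 in simp)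
    then show ?thesis by blast
  qed
qed (auto simp: nth_append)
lemma inversions_append:
  "inversions (xs @ ys) = inversions xs + inversions ys + cross_inversions xs ys"
proof -
  define A where "A = {(i, j). i < j \<and> j < length xs \<and> xs ! j < xs ! i}"
  define B where "B = {(i, j). i < j \<and> j < length ys \<and> ys ! j < ys ! i}"
  define C where "C = {(i, j). i < length xs \<and> j < length ys \<and> ys ! j < xs ! i}"
  let ?f = "\<lambda>(i, j). (i + length xs, j + length xs)" and ?g = "\<lambda>(i, j). (i, j + length xs)"
  have fin: "finite A" "finite B" "finite C"
    unfolding A_def B_def C_def
    by (auto intro: finite_subset[of _ "{..<length xs} \<times> {..<length xs}"]
        finite_subset[of _ "{..<length ys} \<times> {..<length ys}"] finite_subset[of _ "{..<length xs} \<times> {..<length ys}"])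
  have "inversions (xs @ ys) = card (A \<union> ?f ` B \<union> ?g ` C)"
    unfolding inversions_def inversion_pairs_append A_def B_def C_def ..
  also have "\<dots> = card A + card B + card C"
  proof -
    have "A \<inter> ?f ` B = {}" "(A \<union> ?f ` B) \<inter> ?g ` C = {}" by (auto simp: A_def C_def)
    moreover have "inj_on ?f B" "inj_on ?g C" by (auto simp: inj_on_def)
    ultimately show ?thesis using fin by (simp add: card_Un_disjoint card_image)
  qed
  finally show ?thesis by (simp add: inversions_def cross_inversions_def A_def B_def C_def)
qed

lemma cross_inversions_distinct:
  assumes "distinct xs" "distinct ys"
  shows "cross_inversions xs ys = set_inversions (set xs) (set ys)"
proof -
  define C where "C = {(i,j). i < length xs \<and> j < length ys \<and> ys!j < xs!i}"
  let ?h = "\<lambda>(i,j). (xs!i, ys!j)"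
  have "inj_on ?h C" using assms by (auto simp: inj_on_def C_def nth_eq_iff_index_eq)
  moreover have "?h ` C = {(x, y). x \<in> set xs \<and> y \<in> set ys \<and> y < x}"
  proof
    show "?h ` C \<subseteq> {(x, y). x \<in> set xs \<and> y \<in> set ys \<and> y < x}" by (auto simp: C_def)
  next
    show "{(x, y). x \<in> set xs \<and> y \<in> set ys \<and> y < x} \<subseteq> ?h ` C"
    proof clarify
      fix x y assume "x \<in> set xs" "y \<in> set ys" "y < x"
      then obtain i j where "i < length xs" "xs!i = x" "j < length ys" "ys!j = y"
        by (auto simp: in_set_conv_nth)
      then show "(x, y) \<in> ?h ` C" using \<open>y < x\<close> by (auto simp: C_def image_iff intro!: bexI[of _ "(i,j)"])
    qed
  qed
  ultimately show ?thesis by (simp add: cross_inversions_def set_inversions_def C_def[symmetric] card_image[symmetric])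
qed

lemma inversions_sorted_list_of_set: "inversions (sorted_list_of_set S) = 0"
proof -
  have e: "{(i, j). i < j \<and> j < length (sorted_list_of_set S) \<and> sorted_list_of_set S ! j < sorted_list_of_set S ! i} = {}"
    using sorted_wrt_nth_less[OF strict_sorted_list_of_set[of S]] by (auto dest: less_asym)
  show ?thesis unfolding inversions_def e by simp
qed

lemma perm_sign_sorted_list_of_set: "perm_sign (sorted_list_of_set S) = 1"
  by (simp add: perm_sign_inversions inversions_sorted_list_of_set)

lemma set_inversions_add_swap:
  assumes "finite X" "finite Y" "X \<inter> Y = {}"
  shows "set_inversions X Y + set_inversions Y X = card X * card Y"
proof -
  have "{(x, y). x \<in> X \<and> y \<in> Y \<and> x < y} = (\<lambda>(y,x). (x,y)) ` {(y, x). y \<in> Y \<and> x \<in> X \<and> x < y}"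
    by (auto simp: image_iff)
  moreover have "set_inversions Y X = card ((\<lambda>(y,x). (x,y)) ` {(y, x). y \<in> Y \<and> x \<in> X \<and> x < y})"
    by (subst card_image) (auto simp: inj_on_def set_inversions_def)
  ultimately have c: "set_inversions Y X = card {(x, y). x \<in> X \<and> y \<in> Y \<and> x < y}"
    by simp
  have u: "X \<times> Y = {(x, y). x \<in> X \<and> y \<in> Y \<and> y < x} \<union> {(x, y). x \<in> X \<and> y \<in> Y \<and> x < y}"
    using assms(3) by (auto simp: neq_iff)
  have "card (X \<times> Y) = card {(x, y). x \<in> X \<and> y \<in> Y \<and> y < x} + card {(x, y). x \<in> X \<and> y \<in> Y \<and> x < y}"
    unfolding u by (rule card_Un_disjoint)
      (auto intro: finite_subset[of _ "X \<times> Y"] simp: assms)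
  then show ?thesis unfolding c by (simp add: set_inversions_def[of X Y] card_cartesian_product)
qed

lemma prod_if_neg_one:
  assumes "finite A"
  shows "(\<Prod>x\<in>A. (if P x then -1 else 1 :: 'k::comm_ring_1)) = (-1) ^ card {x\<in>A. P x}"
proof -
  have "(\<Prod>x\<in>A. (if P x then -1 else 1 :: 'k)) = (\<Prod>x\<in>A \<inter> {x. P x}. -1) * (\<Prod>x\<in>A \<inter> - {x. P x}. 1)"
    using assms by (rule prod.If_cases)
  also have "\<dots> = (-1) ^ card {x\<in>A. P x}" by (simp add: Int_def conj_commute)
  finally show ?thesis .
qed

lemma perm_sign_as_prod:
  "perm_sign xs = (\<Prod>p\<in>{(i,j). i<j \<and> j<length xs}. (if xs ! snd p < xs ! fst p then -1 else 1 :: 'k::comm_ring_1))"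
proof -
  have f: "finite {(i::nat,j). i<j \<and> j<length xs}"
    by (rule finite_subset[of _ "{..<length xs} \<times> {..<length xs}"]) auto
  have e: "{p \<in> {(i,j). i<j \<and> j<length xs}. xs ! snd p < xs ! fst p} = {(i, j). i < j \<and> j < length xs \<and> xs ! j < xs ! i}"
    by auto
  show ?thesis unfolding prod_if_neg_one[OF f] e perm_sign_def ..
qed

lemma bij_betw_sort_pair:
  fixes \<sigma> :: "nat \<Rightarrow> nat"
  assumes inj: "inj_on \<sigma> {..<n}" and sub: "\<sigma> ` {..<n} \<subseteq> {..<n}"
  shows "bij_betw (\<lambda>p. (min (\<sigma> (fst p)) (\<sigma> (snd p)), max (\<sigma> (fst p)) (\<sigma> (snd p))))
    {(i, j). i < j \<and> j < n} {(i, j). i < j \<and> j < n}"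
    (is "bij_betw ?f ?P ?P")
proof -
  have fin: "finite ?P" by (rule finite_subset[of _ "{..<n} \<times> {..<n}"]) auto
  have iff: "a < n \<Longrightarrow> b < n \<Longrightarrow> \<sigma> a = \<sigma> b \<longleftrightarrow> a = b" for a b
    using inj by (auto simp: inj_on_def)
  have "inj_on ?f ?P"
  proof (rule inj_onI)
    fix p q assume pq: "p \<in> ?P" "q \<in> ?P" "?f p = ?f q"
    obtain i j where p: "p = (i, j)" "i < j" "j < n" using pq by auto
    obtain i' j' where q: "q = (i', j')" "i' < j'" "j' < n" using pq by auto
    from pq(3) p q have "{\<sigma> i, \<sigma> j} = {\<sigma> i', \<sigma> j'}"
      by (auto simp: min_def max_def split: if_splits)
    then have "{i, j} = {i', j'}" using p q iff by (auto simp: doubleton_eq_iff)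
    then show "p = q" using p q by (auto simp: doubleton_eq_iff)
  qed
  moreover have "?f ` ?P \<subseteq> ?P"
  proof
    fix x assume "x \<in> ?f ` ?P"
    then obtain i j where p: "x = ?f (i, j)" "i < j" "j < n" by auto
    have "\<sigma> i \<noteq> \<sigma> j" "\<sigma> i < n" "\<sigma> j < n" using iff sub p by (auto simp: image_subset_iff)
    then show "x \<in> ?P" using p by (auto simp: min_def max_def)
  qed
  ultimately show ?thesis using endo_inj_surj[OF fin] by (simp add: bij_betw_def)
qed

text \<open>Each pair \<open>i < j\<close> contributes the sign of \<open>\<sigma>\<close> on it times the sign of \<open>xs\<close> on the
  sorted pair \<open>{\<sigma> i, \<sigma> j}\<close>, and the sorted pairs run through all pairs once.\<close>

lemma perm_sign_map_nth:
  assumes "distinct xs" "length xs = n" "inj_on \<sigma> {..<n}" "\<sigma> ` {..<n} \<subseteq> {..<n}"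
  shows "perm_sign (map (\<lambda>j. xs ! \<sigma> j) [0..<n]) = (perm_sign (map \<sigma> [0..<n]) :: 'k::comm_ring_1) * perm_sign xs"
proof -
  define Pairs where "Pairs = {(i::nat,j). i<j \<and> j<n}"
  define s :: "nat \<Rightarrow> nat \<Rightarrow> 'k" where "s x y = (if y < x then -1 else 1)" for x y
  define t :: "'a \<Rightarrow> 'a \<Rightarrow> 'k" where "t x y = (if y < x then -1 else 1)" for x y
  define f where "f p = (min (\<sigma> (fst p)) (\<sigma> (snd p)), max (\<sigma> (fst p)) (\<sigma> (snd p)))" for p
  have L: "perm_sign (map (\<lambda>j. xs ! \<sigma> j) [0..<n]) = (\<Prod>p\<in>Pairs. t (xs ! \<sigma> (fst p)) (xs ! \<sigma> (snd p)))"
    unfolding perm_sign_as_prod Pairs_def t_def by (intro prod.cong) auto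
  have S: "perm_sign (map \<sigma> [0..<n]) = (\<Prod>p\<in>Pairs. s (\<sigma> (fst p)) (\<sigma> (snd p)))"
    unfolding perm_sign_as_prod Pairs_def s_def by (intro prod.cong) auto
  have X: "perm_sign xs = (\<Prod>p\<in>Pairs. t (xs ! fst p) (xs ! snd p))"
    unfolding perm_sign_as_prod Pairs_def t_def using assms(2) by (intro prod.cong) auto
  have pw: "t (xs ! \<sigma> (fst p)) (xs ! \<sigma> (snd p)) = s (\<sigma> (fst p)) (\<sigma> (snd p)) * t (xs ! fst (f p)) (xs ! snd (f p))"
    if pP: "p \<in> Pairs" for p
  proof -
    obtain i j where p: "p = (i,j)" "i < j" "j < n" using pP unfolding Pairs_def by (cases p) auto
    have ne: "\<sigma> i \<noteq> \<sigma> j" using assms(3) p by (auto simp: inj_on_def)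
    have lt: "\<sigma> i < n" "\<sigma> j < n" using assms(4) p by (auto simp: image_subset_iff)
    have xne: "xs ! \<sigma> i \<noteq> xs ! \<sigma> j" using assms(1,2) ne lt by (simp add: nth_eq_iff_index_eq)
    show ?thesis
    proof (cases "\<sigma> i < \<sigma> j")
      case True then show ?thesis using p by (simp add: f_def s_def t_def)
    next
      case False then have "\<sigma> j < \<sigma> i" using ne by simp
      then show ?thesis using p xne by (auto simp: f_def s_def t_def min_def max_def)
    qed
  qed
  have "(\<Prod>p\<in>Pairs. t (xs ! fst (f p)) (xs ! snd (f p))) = (\<Prod>p\<in>Pairs. t (xs ! fst p) (xs ! snd p))"
    unfolding f_def Pairs_def by (rule prod.reindex_bij_betw[OF bij_betw_sort_pair[OF assms(3,4)]])
  with X have R: "(\<Prod>p\<in>Pairs. t (xs ! fst (f p)) (xs ! snd (f p))) = perm_sign xs" by simp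
  have "perm_sign (map (\<lambda>j. xs ! \<sigma> j) [0..<n]) = (\<Prod>p\<in>Pairs. s (\<sigma> (fst p)) (\<sigma> (snd p)) * t (xs ! fst (f p)) (xs ! snd (f p)))"
    unfolding L by (rule prod.cong) (auto simp: pw)
  also have "\<dots> = perm_sign (map \<sigma> [0..<n]) * perm_sign xs"
    by (simp add: prod.distrib S R)
  finally show ?thesis .
qed

lemma inversions_transposition:
  assumes "p < q" "q < n"
  shows "inversions (map (\<lambda>k. if k = p then q else if k = q then p else k) [0..<n]) = 2 * (q - p - 1) + 1"
proof -
  let ?\<tau> = "\<lambda>k::nat. if k = p then q else if k = q then p else k"
  have e: "{(i, j). i < j \<and> j < length (map ?\<tau> [0..<n]) \<and> map ?\<tau> [0..<n] ! j < map ?\<tau> [0..<n] ! i}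
      = ((\<lambda>j. (p,j)) ` {p<..<q} \<union> (\<lambda>i. (i,q)) ` {p<..<q}) \<union> {(p,q)}"
    using assms by (auto simp: image_iff split: if_splits)
  have "card (((\<lambda>j. (p,j)) ` {p<..<q} \<union> (\<lambda>i. (i,q)) ` {p<..<q}) \<union> {(p,q)}) = (q - p - 1) + (q - p - 1) + 1"
    by (subst card_Un_disjoint; (subst card_Un_disjoint)?) (auto simp: card_image inj_on_def)
  then show ?thesis unfolding inversions_def e by simp
qed

lemma perm_sign_transposition:
  assumes "p < q" "q < n"
  shows "perm_sign (map (\<lambda>k. if k = p then q else if k = q then p else k) [0..<n]) = (-1 :: 'k::comm_ring_1)"
  by (simp add: perm_sign_inversions inversions_transposition[OF assms])

lemma perm_sign_append:
  assumes "distinct xs" "distinct ys"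
  shows "perm_sign (xs @ ys) = perm_sign xs * perm_sign ys * (-1) ^ set_inversions (set xs) (set ys)"
  using assms by (simp add: perm_sign_inversions inversions_append cross_inversions_distinct power_add)

lemma distinct_iff_inj_on_nth: "distinct zs \<longleftrightarrow> inj_on (nth zs) {..<length zs}"
  by (auto simp: distinct_conv_nth inj_on_def)

section \<open>Exterior products and the derivation\<close>

lemma ext_term_0[simp]: "ext_term 0 xs = 0"
  by (simp add: ext_term_def)

lemma ext_term_add: "ext_term (a + b) xs = ext_term a xs + ext_term b xs"
  by (simp add: ext_term_def single_add distrib_right)

lemma ext_term_uminus: "ext_term (- a) xs = - ext_term a xs"
  by (simp add: ext_term_def single_uminus)

lemma ext_term_sorted: "finite S \<Longrightarrow> ext_term c (sorted_list_of_set S) = Poly_Mapping.single S c"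
  by (simp add: ext_term_def perm_sign_sorted_list_of_set)

lemma ext_term_perm:
  fixes c :: "'k::comm_ring_1"
  assumes "length zs = n" "inj_on \<sigma> {..<n}" "\<sigma> ` {..<n} \<subseteq> {..<n}"
  shows "ext_term c (map (\<lambda>j. zs ! \<sigma> j) [0..<n]) = ext_term (c * perm_sign (map \<sigma> [0..<n])) zs"
proof -
  have img: "\<sigma> ` {..<n} = {..<n}" by (rule endo_inj_surj) (use assms in auto)
  have st: "set (map (\<lambda>j. zs ! \<sigma> j) [0..<n]) = set zs"
  proof -
    have "set (map (\<lambda>j. zs ! \<sigma> j) [0..<n]) = nth zs ` (\<sigma> ` {..<n})" by auto
    also have "\<dots> = set zs" using img assms(1) by (auto simp: set_conv_nth)
    finally show ?thesis .
  qed
  have "distinct (map (\<lambda>j. zs ! \<sigma> j) [0..<n]) \<longleftrightarrow> inj_on ((nth zs) \<circ> \<sigma>) {..<n}"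
    by (simp add: distinct_map atLeast0LessThan o_def)
  also have "\<dots> \<longleftrightarrow> inj_on (nth zs) (\<sigma> ` {..<n})"
    using comp_inj_on_iff[OF assms(2), of "nth zs"] by simp
  also have "\<dots> \<longleftrightarrow> distinct zs" using img assms(1) by (simp add: distinct_iff_inj_on_nth)
  finally have d: "distinct (map (\<lambda>j. zs ! \<sigma> j) [0..<n]) \<longleftrightarrow> distinct zs" .
  show ?thesis
  proof (cases "distinct zs")
    case True
    have "perm_sign (map (\<lambda>j. zs ! \<sigma> j) [0..<n]) = (perm_sign (map \<sigma> [0..<n]) :: 'k) * perm_sign zs"
      by (rule perm_sign_map_nth[OF True assms(1,2,3)])
    then show ?thesis using d st True
      by (simp add: ext_term_def mult.assoc)
  next
    case False then show ?thesis using d by (simp add: ext_term_def)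
  qed
qed

lemma ext_term_swap_lt:
  assumes "p < q" "q < length xs"
  shows "ext_term c (xs[p := xs!q, q := xs!p]) = - ext_term c xs"
proof -
  let ?\<tau> = "\<lambda>k::nat. if k = p then q else if k = q then p else k"
  let ?n = "length xs"
  have eq: "xs[p := xs!q, q := xs!p] = map (\<lambda>j. xs ! ?\<tau> j) [0..<?n]"
    using assms by (intro nth_equalityI) (auto simp: nth_list_update)
  have inj: "inj_on ?\<tau> {..<?n}" by (auto simp: inj_on_def split: if_splits)
  have sub: "?\<tau> ` {..<?n} \<subseteq> {..<?n}" using assms by auto
  show ?thesis unfolding eq ext_term_perm[OF refl inj sub] perm_sign_transposition[OF assms]
    by (simp add: ext_term_uminus)
qed

lemma ext_term_swap:
  assumes "p \<noteq> q" "p < length xs" "q < length xs"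
  shows "ext_term c (xs[p := xs!q, q := xs!p]) = - ext_term c xs"
proof (cases "p < q")
  case True then show ?thesis using ext_term_swap_lt assms by blast
next
  case False
  then have "q < p" using assms by simp
  moreover have "xs[p := xs!q, q := xs!p] = xs[q := xs!p, p := xs!q]"
    using assms by (simp add: list_update_swap)
  ultimately show ?thesis using ext_term_swap_lt assms by metis
qed

text \<open>The shape \<open>\<Sum>k\<in>keys p. f k (lookup p k)\<close> is the one expected by
  \<open>sum_keys_lookup_add\<close>.\<close>

lemma wedge_as_sum_keys: "wedge p q = (\<Sum>S\<in>Poly_Mapping.keys p. (\<lambda>S a. \<Sum>T\<in>Poly_Mapping.keys q.
      ext_term (a * Poly_Mapping.lookup q T) (sorted_list_of_set S @ sorted_list_of_set T)) S (Poly_Mapping.lookup p S))"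
  by (simp add: wedge_def)

lemma wedge_zero_left[simp]: "wedge 0 q = 0" by (simp add: wedge_def)
lemma wedge_zero_right[simp]: "wedge p 0 = 0" by (simp add: wedge_def)

lemma wedge_add_left: "wedge (p + q) r = wedge p r + wedge q r"
  unfolding wedge_as_sum_keys
  by (rule sum_keys_lookup_add) (simp_all add: ext_term_add distrib_right sum.distrib)

lemma wedge_add_right: "wedge p (q + r) = wedge p q + wedge p r"
proof -
  have "(\<Sum>T\<in>Poly_Mapping.keys (q + r). ext_term (Poly_Mapping.lookup p S * Poly_Mapping.lookup (q + r) T) (sorted_list_of_set S @ sorted_list_of_set T))
     = (\<Sum>T\<in>Poly_Mapping.keys q. ext_term (Poly_Mapping.lookup p S * Poly_Mapping.lookup q T) (sorted_list_of_set S @ sorted_list_of_set T))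
     + (\<Sum>T\<in>Poly_Mapping.keys r. ext_term (Poly_Mapping.lookup p S * Poly_Mapping.lookup r T) (sorted_list_of_set S @ sorted_list_of_set T))"
    for S
    by (rule sum_keys_lookup_add[where f = "\<lambda>T b. ext_term (Poly_Mapping.lookup p S * b) (sorted_list_of_set S @ sorted_list_of_set T)"])
      (simp_all add: ext_term_add distrib_left)
  then show ?thesis by (simp add: wedge_def sum.distrib)
qed

lemma wedge_sum_left: "finite A \<Longrightarrow> wedge (\<Sum>i\<in>A. f i) q = (\<Sum>i\<in>A. wedge (f i) q)"
  by (induction A rule: finite_induct) (simp_all add: wedge_add_left)

lemma wedge_sum_right: "finite A \<Longrightarrow> wedge p (\<Sum>i\<in>A. f i) = (\<Sum>i\<in>A. wedge p (f i))"
  by (induction A rule: finite_induct) (simp_all add: wedge_add_right)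

lemma wedge_single: "wedge (Poly_Mapping.single S a) (Poly_Mapping.single T b) = ext_term (a*b) (sorted_list_of_set S @ sorted_list_of_set T)"
  by (cases "a = 0"; cases "b = 0") (simp_all add: wedge_def)

lemma ext_term_distinct: "distinct xs \<Longrightarrow> ext_term c xs = Poly_Mapping.single (set xs) (c * perm_sign xs)"
  by (simp add: ext_term_def)

lemma wedge_ext: "wedge (ext_term a xs) (ext_term b ys) = ext_term (a*b) (xs@ys)"
proof (cases "distinct xs \<and> distinct ys")
  case False then show ?thesis by (auto simp: ext_term_def)
next
  case True
  then have dx: "distinct xs" and dy: "distinct ys" by auto
  let ?X = "set xs" and ?Y = "set ys"
  have "wedge (ext_term a xs) (ext_term b ys) = ext_term (a * perm_sign xs * (b * perm_sign ys)) (sorted_list_of_set ?X @ sorted_list_of_set ?Y)"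
    using dx dy by (simp add: ext_term_distinct wedge_single)
  also have "\<dots> = ext_term (a*b) (xs@ys)"
  proof (cases "?X \<inter> ?Y = {}")
    case True
    have d1: "distinct (sorted_list_of_set ?X @ sorted_list_of_set ?Y)" using True by simp
    have d2: "distinct (xs @ ys)" using True dx dy by simp
    have "perm_sign (sorted_list_of_set ?X @ sorted_list_of_set ?Y) = ((-1) ^ set_inversions ?X ?Y :: 'b)"
      by (simp add: perm_sign_append perm_sign_sorted_list_of_set)
    then show ?thesis using d1 d2 dx dy
      by (simp add: ext_term_distinct perm_sign_append ac_simps)
  next
    case False
    then have "\<not> distinct (sorted_list_of_set ?X @ sorted_list_of_set ?Y)" "\<not> distinct (xs@ys)" by auto
    then show ?thesis by (simp add: ext_term_def)
  qed
  finally show ?thesis .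
qed

lemma ext_term_comm:
  fixes c :: "'k::comm_ring_1"
  assumes "distinct xs" "distinct ys"
  shows "ext_term c (xs @ ys) = ext_term ((-1) ^ (length xs * length ys) * c) (ys @ xs)"
proof (cases "set xs \<inter> set ys = {}")
  case True
  have cs: "set_inversions (set xs) (set ys) + set_inversions (set ys) (set xs) = length xs * length ys"
    using set_inversions_add_swap[OF _ _ True] assms by (simp add: distinct_card)
  have "(-1::'k) ^ set_inversions (set xs) (set ys) = (-1) ^ (length xs * length ys) * (-1) ^ set_inversions (set ys) (set xs)"
  proof -
    have "(-1::'k) ^ (length xs * length ys) * (-1) ^ set_inversions (set ys) (set xs) =
        (-1) ^ set_inversions (set xs) (set ys) * ((-1) ^ set_inversions (set ys) (set xs) * (-1) ^ set_inversions (set ys) (set xs))"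
      by (simp only: power_add mult.assoc flip: cs)
    then show ?thesis by simp
  qed
  then show ?thesis using True assms
    by (simp add: ext_term_distinct perm_sign_append Un_commute Int_commute ac_simps)
next
  case False then show ?thesis by (auto simp: ext_term_def)
qed

lemma gderiv_as_sum_keys: "gderiv sh p = (\<Sum>S\<in>Poly_Mapping.keys p. (\<lambda>S a. \<Sum>j<card S.
      ext_term a ((sorted_list_of_set S)[j := sh (sorted_list_of_set S ! j)])) S (Poly_Mapping.lookup p S))"
  by (simp add: gderiv_def)

lemma gderiv_zero[simp]: "gderiv sh 0 = 0" by (simp add: gderiv_def)

lemma gderiv_add: "gderiv sh (p + q) = gderiv sh p + gderiv sh q"
  unfolding gderiv_as_sum_keys by (rule sum_keys_lookup_add) (simp_all add: ext_term_add sum.distrib)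

lemma gderiv_single: "gderiv sh (Poly_Mapping.single S a) =
   (\<Sum>j<card S. ext_term a ((sorted_list_of_set S)[j := sh (sorted_list_of_set S ! j)]))"
  unfolding gderiv_as_sum_keys by (rule sum_keys_lookup_single) simp

lemma distinct_sorted_list_of_set_perm:
  assumes dL: "distinct L"
  obtains \<sigma> where "bij_betw \<sigma> {..<length L} {..<length L}"
    "L = map (\<lambda>j. sorted_list_of_set (set L) ! \<sigma> j) [0..<length L]"
proof -
  define ys where "ys = sorted_list_of_set (set L)"
  define n where "n = length L"
  have lys: "length ys = n" by (simp add: ys_def n_def distinct_card dL)
  have bij: "bij_betw (nth ys) {..<n} (set L)"
  proof -
    have "inj_on (nth ys) {..<n}" using lys distinct_iff_inj_on_nth[of ys] by (simp add: ys_def)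
    moreover have "nth ys ` {..<length ys} = set ys" by (metis atLeast_upt list.set_map map_nth)
    then have "nth ys ` {..<n} = set L" using lys by (simp add: ys_def)
    ultimately show ?thesis by (simp add: bij_betw_def)
  qed
  define \<sigma> where "\<sigma> j = the_inv_into {..<n} (nth ys) (L!j)" for j
  have sig: "j < n \<Longrightarrow> \<sigma> j < n \<and> ys ! \<sigma> j = L ! j" for j
    using bij unfolding \<sigma>_def n_def
    by (metis bij_betw_def f_the_inv_into_f_bij_betw lessThan_iff nth_mem the_inv_into_into subsetI)
  have inj: "inj_on \<sigma> {..<n}"
  proof (rule inj_onI)
    fix i j assume "i \<in> {..<n}" "j \<in> {..<n}" "\<sigma> i = \<sigma> j"
    then have "L!i = L!j" using sig by (metis lessThan_iff)
    then show "i = j" using dL \<open>i \<in> {..<n}\<close> \<open>j \<in> {..<n}\<close> by (simp add: n_def nth_eq_iff_index_eq)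
  qed
  have "\<sigma> ` {..<n} = {..<n}" by (rule endo_inj_surj[OF _ _ inj]) (use sig in auto)
  with inj have "bij_betw \<sigma> {..<n} {..<n}" by (simp add: bij_betw_def)
  moreover have "L = map (\<lambda>j. ys ! \<sigma> j) [0..<n]"
    by (rule nth_equalityI) (simp_all add: n_def sig)
  ultimately show ?thesis using that unfolding ys_def n_def by blast
qed

lemma gderiv_ext_distinct:
  assumes dL: "distinct L"
  shows "gderiv sh (ext_term c L) = (\<Sum>j<length L. ext_term c (L[j := sh (L!j)]))"
proof -
  define S where "S = set L"
  define ys where "ys = sorted_list_of_set S"
  define n where "n = length L"
  have fS: "finite S" by (simp add: S_def)
  have lys: "length ys = n" by (simp add: ys_def S_def n_def distinct_card dL)
  obtain \<sigma> where bs: "bij_betw \<sigma> {..<n} {..<n}" and Leq: "L = map (\<lambda>j. ys ! \<sigma> j) [0..<n]"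
    using distinct_sorted_list_of_set_perm[OF dL] unfolding ys_def S_def n_def by blast
  have inj: "inj_on \<sigma> {..<n}" and sub: "\<sigma> ` {..<n} \<subseteq> {..<n}"
    using bs by (auto simp: bij_betw_def)
  have sig: "j < n \<Longrightarrow> ys ! \<sigma> j = L ! j" for j by (subst Leq) simp
  define d where "d = c * perm_sign (map \<sigma> [0..<n])"
  have Lj: "L[j := w] = map (\<lambda>i. (ys[\<sigma> j := w]) ! \<sigma> i) [0..<n]" if "j < n" for j w
  proof (rule nth_equalityI)
    fix i assume "i < length (L[j := w])"
    then have i: "i < n" by (simp add: n_def)
    have "\<sigma> i = \<sigma> j \<longleftrightarrow> i = j" using inj i that by (auto simp: inj_on_def)
    then show "L[j := w] ! i = map (\<lambda>i. (ys[\<sigma> j := w]) ! \<sigma> i) [0..<n] ! i"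
      using i that sig[of i] sub lys by (auto simp: nth_list_update n_def)
  qed (simp add: n_def)
  have lhs: "ext_term c L = Poly_Mapping.single S d"
    using ext_term_perm[OF lys inj sub, of c] Leq by (simp add: d_def ys_def ext_term_sorted fS)
  have "(\<Sum>j<length L. ext_term c (L[j := sh (L!j)])) = (\<Sum>j<n. ext_term d (ys[\<sigma> j := sh (ys ! \<sigma> j)]))"
  proof (rule sum.cong)
    fix j assume "j \<in> {..<n}"
    then have j: "j < n" by simp
    have "ext_term c (L[j := sh (L!j)]) = ext_term c (map (\<lambda>i. (ys[\<sigma> j := sh (ys ! \<sigma> j)]) ! \<sigma> i) [0..<n])"
      using Lj[OF j] sig[OF j] by simp
    also have "\<dots> = ext_term d (ys[\<sigma> j := sh (ys ! \<sigma> j)])"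
      using ext_term_perm[OF _ inj sub, of "ys[\<sigma> j := sh (ys ! \<sigma> j)]" c] lys by (simp add: d_def)
    finally show "ext_term c (L[j := sh (L!j)]) = ext_term d (ys[\<sigma> j := sh (ys ! \<sigma> j)])" .
  qed (simp add: n_def)
  also have "\<dots> = (\<Sum>k<n. ext_term d (ys[k := sh (ys ! k)]))"
    by (rule sum.reindex_bij_betw[OF bs, where g = "\<lambda>k. ext_term d (ys[k := sh (ys ! k)])"])
  also have "\<dots> = gderiv sh (Poly_Mapping.single S d)"
    using lys by (simp add: gderiv_single ys_def fS S_def distinct_card dL n_def)
  finally show ?thesis using lhs by simp
qed

lemma gderiv_ext:
  "gderiv sh (ext_term c L) = (\<Sum>j<length L. ext_term c (L[j := sh (L!j)]))"
proof (cases "distinct L")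
  case True then show ?thesis by (rule gderiv_ext_distinct)
next
  case False
  then obtain p q where pq: "p < q" "q < length L" "L!p = L!q"
    by (metis distinct_conv_nth linorder_neqE_nat)
  have p: "p < length L" using pq by simp
  let ?f = "\<lambda>j. ext_term c (L[j := sh (L!j)])"
  have z: "?f j = 0" if "j < length L" "j \<noteq> p" "j \<noteq> q" for j
  proof -
    have "L[j := sh (L!j)] ! p = L[j := sh (L!j)] ! q" using that pq by simp
    then have "\<not> distinct (L[j := sh (L!j)])"
      using pq by (metis distinct_conv_nth length_list_update less_not_refl3 order.strict_trans)
    then show ?thesis by (simp add: ext_term_def)
  qed
  have sw: "L[q := sh (L!q)] = (L[p := sh (L!p)])[p := (L[p := sh (L!p)]) ! q, q := (L[p := sh (L!p)]) ! p]"
    using pq by (intro nth_equalityI) (auto simp: nth_list_update)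
  have pqc: "?f p + ?f q = 0"
    using ext_term_swap[of p q "L[p := sh (L!p)]" c] pq sw by simp
  have "(\<Sum>j<length L. ?f j) = (\<Sum>j\<in>{p,q}. ?f j) + (\<Sum>j\<in>{..<length L} - {p,q}. ?f j)"
    using pq by (subst sum.subset_diff[of "{p,q}"]) auto
  also have "(\<Sum>j\<in>{..<length L} - {p,q}. ?f j) = 0" by (rule sum.neutral) (use z in auto)
  also have "(\<Sum>j\<in>{p,q}. ?f j) = 0" using pq pqc by simp
  finally show ?thesis using False by (simp add: ext_term_def)
qed

definition finite_monoms :: "('a set \<Rightarrow>\<^sub>0 'k::zero) \<Rightarrow> bool" where
  "finite_monoms p \<longleftrightarrow> (\<forall>S\<in>Poly_Mapping.keys p. finite S)"

definition even_monoms :: "('a set \<Rightarrow>\<^sub>0 'k::zero) \<Rightarrow> bool" where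
  "even_monoms p \<longleftrightarrow> (\<forall>S\<in>Poly_Mapping.keys p. finite S \<and> even (card S))"

lemma keys_ext_term: "Poly_Mapping.keys (ext_term c xs) \<subseteq> (if distinct xs then {set xs} else {})"
  by (simp add: ext_term_def)

lemma keys_wedgeE:
  assumes "finite_monoms p" "finite_monoms q" "U \<in> Poly_Mapping.keys (wedge p q)"
  obtains S T where "U = S \<union> T" "S \<in> Poly_Mapping.keys p" "T \<in> Poly_Mapping.keys q" "S \<inter> T = {}"
proof -
  let ?t = "\<lambda>S T. ext_term (Poly_Mapping.lookup p S * Poly_Mapping.lookup q T) (sorted_list_of_set S @ sorted_list_of_set T)"
  have "U \<in> (\<Union>S\<in>Poly_Mapping.keys p. Poly_Mapping.keys (\<Sum>T\<in>Poly_Mapping.keys q. ?t S T))"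
    using assms(3) unfolding wedge_def by (rule subsetD[OF keys_sum])
  then obtain S where S: "S \<in> Poly_Mapping.keys p" and U0: "U \<in> Poly_Mapping.keys (\<Sum>T\<in>Poly_Mapping.keys q. ?t S T)"
    by blast
  from U0 have "U \<in> (\<Union>T\<in>Poly_Mapping.keys q. Poly_Mapping.keys (?t S T))" by (rule subsetD[OF keys_sum])
  then obtain T where T: "T \<in> Poly_Mapping.keys q" and U: "U \<in> Poly_Mapping.keys (?t S T)" by blast
  have "finite S" "finite T" using S T assms(1,2) by (auto simp: finite_monoms_def)
  then have "U = S \<union> T" "S \<inter> T = {}" using U by (auto simp: ext_term_def split: if_splits)
  then show ?thesis using S T that by blast
qed

lemma even_monoms_imp_finite: "even_monoms p \<Longrightarrow> finite_monoms p" by (simp add: even_monoms_def finite_monoms_def)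

lemma even_monoms_wedge:
  assumes "even_monoms p" "even_monoms q"
  shows "even_monoms (wedge p q)"
  unfolding even_monoms_def
proof
  fix U assume "U \<in> Poly_Mapping.keys (wedge p q)"
  then obtain S T where "U = S \<union> T" "S \<in> Poly_Mapping.keys p" "T \<in> Poly_Mapping.keys q" "S \<inter> T = {}"
    by (rule keys_wedgeE[OF even_monoms_imp_finite[OF assms(1)] even_monoms_imp_finite[OF assms(2)]])
  then show "finite U \<and> even (card U)" using assms by (auto simp: even_monoms_def card_Un_disjoint)
qed

lemma keys_gderiv_card:
  assumes "finite_monoms p" "U \<in> Poly_Mapping.keys (gderiv sh p)"
  obtains S where "S \<in> Poly_Mapping.keys p" "finite U" "card U = card S"
proof -
  let ?t = "\<lambda>S j. ext_term (Poly_Mapping.lookup p S) ((sorted_list_of_set S)[j := sh (sorted_list_of_set S ! j)])"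
  have "U \<in> (\<Union>S\<in>Poly_Mapping.keys p. Poly_Mapping.keys (\<Sum>j<card S. ?t S j))"
    using assms(2) unfolding gderiv_def by (rule subsetD[OF keys_sum])
  then obtain S where S: "S \<in> Poly_Mapping.keys p" and U0: "U \<in> Poly_Mapping.keys (\<Sum>j<card S. ?t S j)"
    by blast
  from U0 have "U \<in> (\<Union>j<card S. Poly_Mapping.keys (?t S j))" by (rule subsetD[OF keys_sum])
  then obtain j where U: "U \<in> Poly_Mapping.keys (?t S j)" by blast
  have "finite S" using S assms(1) by (simp add: finite_monoms_def)
  then have "finite U" "card U = card S" using U by (auto simp: ext_term_def distinct_card split: if_splits)
  then show ?thesis using S that by blast
qed
lemma even_monoms_gderiv:
  assumes "even_monoms p"
  shows "even_monoms (gderiv sh p)"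
  unfolding even_monoms_def
proof
  fix U assume "U \<in> Poly_Mapping.keys (gderiv sh p)"
  then obtain S where "S \<in> Poly_Mapping.keys p" "finite U" "card U = card S"
    by (rule keys_gderiv_card[OF even_monoms_imp_finite[OF assms]])
  then show "finite U \<and> even (card U)" using assms by (auto simp: even_monoms_def)
qed

lemma even_monoms_add: "even_monoms p \<Longrightarrow> even_monoms q \<Longrightarrow> even_monoms (p + q)"
  unfolding even_monoms_def using keys_add[of p q] by (meson UnE subsetD)

lemma even_monoms_uminus: "even_monoms p \<Longrightarrow> even_monoms (- p)"
  unfolding even_monoms_def by simp

lemma even_monoms_diff: "even_monoms p \<Longrightarrow> even_monoms q \<Longrightarrow> even_monoms (p - (q :: 'a set \<Rightarrow>\<^sub>0 'b::ab_group_add))"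
proof -
  assume "even_monoms p" "even_monoms q"
  moreover have "p - q = p + - q" by simp
  ultimately show ?thesis by (simp only: even_monoms_add even_monoms_uminus)
qed

lemma even_monoms_single: "finite S \<Longrightarrow> even (card S) \<Longrightarrow> even_monoms (Poly_Mapping.single S c)"
  by (simp add: even_monoms_def)


lemma finite_monoms_induct[consumes 1, case_names zero ext_term add]:
  assumes "finite_monoms p" "P 0" "\<And>a xs. P (ext_term a xs)" "\<And>q r. P q \<Longrightarrow> P r \<Longrightarrow> P (q + r)"
  shows "P p"
proof (rule poly_mapping_induct_keys[of P p])
  fix S a assume "S \<in> Poly_Mapping.keys p"
  then have "finite S" using assms(1) by (simp add: finite_monoms_def)
  then show "P (Poly_Mapping.single S a)" using assms(3)[of a "sorted_list_of_set S"] by (simp add: ext_term_sorted)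
qed (use assms in auto)

lemma wedge_assoc:
  fixes p q r :: "'a::linorder set \<Rightarrow>\<^sub>0 'k::comm_ring_1"
  assumes "finite_monoms p" "finite_monoms q" "finite_monoms r"
  shows "wedge (wedge p q) r = wedge p (wedge q r)"
  using assms(1)
proof (induction p rule: finite_monoms_induct)
  case (ext_term a xs)
  show ?case
    using assms(2)
  proof (induction q rule: finite_monoms_induct)
    case (ext_term b ys)
    show ?case
      using assms(3)
      by (induction r rule: finite_monoms_induct) (simp_all add: wedge_ext wedge_add_right mult.assoc)
  qed (simp_all add: wedge_add_left wedge_add_right)
qed (simp_all add: wedge_add_left)

lemma wedge_comm:
  fixes p q :: "'a::linorder set \<Rightarrow>\<^sub>0 'k::comm_ring_1"
  assumes "even_monoms p" "even_monoms q"
  shows "wedge p q = wedge q p"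
proof (induction p rule: poly_mapping_induct_keys)
  case (single S a)
  then have S: "finite S" "even (card S)" using assms(1) by (auto simp: even_monoms_def)
  show ?case
  proof (induction q rule: poly_mapping_induct_keys)
    case (single T b)
    then have "finite T" using assms(2) by (auto simp: even_monoms_def)
    then show ?case using ext_term_comm[of "sorted_list_of_set S" "sorted_list_of_set T" "a * b"] S
      by (simp add: wedge_single mult.commute)
  qed (simp_all add: wedge_add_left wedge_add_right)
qed (simp_all add: wedge_add_left wedge_add_right)

lemma lookup_gscal: "Poly_Mapping.lookup (gscal c p) k = c * Poly_Mapping.lookup p k"
  unfolding gscal_def by transfer (simp add: when_def)

lemma gscal_zero[simp]: "gscal c 0 = 0"
  by (rule poly_mapping_eqI) (simp add: lookup_gscal)

lemma gscal_add: "gscal c (p + q) = gscal c p + gscal c q"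
  by (rule poly_mapping_eqI) (simp add: lookup_gscal lookup_add distrib_left)

lemma gscal_ext_term: "gscal c (ext_term a xs) = ext_term (c * a) xs"
  by (rule poly_mapping_eqI) (simp add: lookup_gscal ext_term_def lookup_single when_def mult.assoc)

lemma wedge_const_left:
  fixes p :: "'a::linorder set \<Rightarrow>\<^sub>0 'k::comm_ring_1"
  assumes "finite_monoms p"
  shows "wedge (Poly_Mapping.single {} c) p = gscal c p"
proof -
  have "wedge (ext_term c []) p = gscal c p"
    using assms
    by (induction p rule: finite_monoms_induct) (simp_all add: wedge_ext wedge_add_right gscal_add gscal_ext_term)
  then show ?thesis by (simp add: ext_term_def perm_sign_def)
qed

lemma wedge_one_left:
  fixes p :: "'a::linorder set \<Rightarrow>\<^sub>0 'k::comm_ring_1"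
  shows "finite_monoms p \<Longrightarrow> wedge (Poly_Mapping.single {} 1) p = p"
  by (simp add: wedge_const_left poly_mapping_eqI lookup_gscal)

lemma sum_lessThan_add_nat: "(\<Sum>j<n+(m::nat). f j) = (\<Sum>j<n. f j) + (\<Sum>i<m. f (n+i))"
  by (induction m) (simp_all add: add.assoc)

lemma gderiv_leibniz:
  fixes p q :: "'a::linorder set \<Rightarrow>\<^sub>0 'k::comm_ring_1"
  assumes "finite_monoms p" "finite_monoms q"
  shows "gderiv sh (wedge p q) = wedge (gderiv sh p) q + wedge p (gderiv sh q)"
  using assms(1)
proof (induction p rule: finite_monoms_induct)
  case (ext_term a xs)
  show ?case
    using assms(2)
  proof (induction q rule: finite_monoms_induct)
    case (ext_term b ys)
    have "gderiv sh (wedge (ext_term a xs) (ext_term b ys)) =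
       (\<Sum>j<length xs + length ys. ext_term (a*b) ((xs@ys)[j := sh ((xs@ys)!j)]))"
      by (simp add: wedge_ext gderiv_ext)
    also have "\<dots> = (\<Sum>j<length xs. ext_term (a*b) (xs[j := sh (xs!j)] @ ys))
        + (\<Sum>i<length ys. ext_term (a*b) (xs @ ys[i := sh (ys!i)]))"
      by (simp add: sum_lessThan_add_nat list_update_append nth_append)
    also have "\<dots> = wedge (gderiv sh (ext_term a xs)) (ext_term b ys) + wedge (ext_term a xs) (gderiv sh (ext_term b ys))"
      by (simp add: gderiv_ext wedge_sum_left wedge_sum_right wedge_ext)
    finally show ?case .
  qed (simp_all add: wedge_add_left wedge_add_right gderiv_add)
qed (simp_all add: wedge_add_left wedge_add_right gderiv_add)

section \<open>The even Grassmann algebra as a commutative ring\<close>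

text \<open>Together with the scalars, the even elements form a commutative ring; as a type they
  give access to the library on rings (powers, finite products and sums).\<close>

typedef (overloaded) ('k::comm_ring_1) ev_grass = "{p :: 'k grass. even_monoms p}" morphisms rep_ev abs_ev
  by (rule exI[of _ 0]) (simp add: even_monoms_def)

setup_lifting type_definition_ev_grass

instantiation ev_grass :: (comm_ring_1) comm_ring_1
begin
lift_definition zero_ev_grass :: "'a ev_grass" is 0 by (simp add: even_monoms_def)
lift_definition one_ev_grass :: "'a ev_grass" is "Poly_Mapping.single {} 1" by (simp add: even_monoms_single)
lift_definition plus_ev_grass :: "'a ev_grass \<Rightarrow> 'a ev_grass \<Rightarrow> 'a ev_grass" is "(+)" by (rule even_monoms_add)
lift_definition minus_ev_grass :: "'a ev_grass \<Rightarrow> 'a ev_grass \<Rightarrow> 'a ev_grass" is "(-)" by (rule even_monoms_diff)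
lift_definition uminus_ev_grass :: "'a ev_grass \<Rightarrow> 'a ev_grass" is uminus by (rule even_monoms_uminus)
lift_definition times_ev_grass :: "'a ev_grass \<Rightarrow> 'a ev_grass \<Rightarrow> 'a ev_grass" is wedge by (rule even_monoms_wedge)
instance
proof
  fix a b c :: "'a ev_grass"
  show "a * b * c = a * (b * c)" by transfer (simp add: wedge_assoc even_monoms_imp_finite)
  show "a * b = b * a" by transfer (rule wedge_comm)
  show "1 * a = a" by transfer (simp add: wedge_one_left even_monoms_imp_finite)
  show "(a + b) * c = a * c + b * c" by transfer (rule wedge_add_left)
  show "a + b + c = a + (b + c)" by transfer (rule add.assoc)
  show "a + b = b + a" by transfer (rule add.commute)
  show "0 + a = a" by transfer simp
  show "- a + a = 0" by transfer simp
  show "a - b = a + - b" by transfer simp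
  show "(0::'a ev_grass) \<noteq> 1" by transfer (metis lookup_single_eq lookup_zero zero_neq_one)
qed
end

lemma finite_monoms_rep_ev: "finite_monoms (rep_ev x)"
  using rep_ev even_monoms_imp_finite by auto

lift_definition ev_deriv :: "'k::comm_ring_1 ev_grass \<Rightarrow> 'k ev_grass" is "gderiv shift" by (rule even_monoms_gderiv)

lemma ev_deriv_add: "ev_deriv (x + y) = ev_deriv x + ev_deriv y"
  by transfer (rule gderiv_add)

lemma ev_deriv_mult: "ev_deriv (x * y) = ev_deriv x * y + x * ev_deriv y"
  by transfer (simp add: gderiv_leibniz even_monoms_imp_finite)

lemma ev_deriv_one[simp]: "ev_deriv 1 = 0"
  by transfer (simp add: gderiv_single)

lemma ev_deriv_zero[simp]: "ev_deriv 0 = 0"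
  by transfer simp

lemma ev_deriv_sum: "ev_deriv (sum f A) = sum (\<lambda>i. ev_deriv (f i)) A"
  by (induction A rule: infinite_finite_induct) (simp_all add: ev_deriv_add)

lemma ev_deriv_of_nat[simp]: "ev_deriv (of_nat n) = 0"
  by (induction n) (simp_all add: ev_deriv_add)

lemma ev_deriv_of_nat_mult: "ev_deriv (of_nat n * x) = of_nat n * ev_deriv x"
  by (simp add: ev_deriv_mult)

lift_definition ev_const :: "'k::comm_ring_1 \<Rightarrow> 'k ev_grass" is "\<lambda>c. Poly_Mapping.single {} c" by (simp add: even_monoms_single)

lemma ev_const_add: "ev_const (a + b) = ev_const a + ev_const b" by transfer (simp add: single_add)
lemma ev_const_mult: "ev_const (a * b) = ev_const a * ev_const b" by transfer (simp add: wedge_single ext_term_def perm_sign_def)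
lemma ev_const_one[simp]: "ev_const 1 = 1" by transfer simp
lemma ev_const_zero[simp]: "ev_const 0 = 0" by transfer simp
lemma ev_deriv_const[simp]: "ev_deriv (ev_const c) = 0" by transfer (simp add: gderiv_single)
lemma rep_ev_const_mult: "rep_ev (ev_const c * x) = gscal c (rep_ev x)"
  by transfer (simp add: wedge_const_left even_monoms_imp_finite)

lemma of_nat_ev_grass: "(of_nat k :: 'k::comm_ring_1 ev_grass) = ev_const (of_nat k)"
  by (induction k) (simp_all add: ev_const_add)

lemma rep_ev_sum: "rep_ev (sum f A) = (\<Sum>i\<in>A. rep_ev (f i))"
  by (induction A rule: infinite_finite_induct) (simp_all add: zero_ev_grass.rep_eq plus_ev_grass.rep_eq)

lift_definition ev_pair :: "nat \<Rightarrow> nat \<Rightarrow> nat \<Rightarrow> 'k::comm_ring_1 ev_grass" is "\<lambda>l a b. ext_term 1 [xi l a, eta l b]"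
proof -
  fix l a b
  have "xi l a \<noteq> eta l b" by (simp add: xi_def eta_def)
  then show "even_monoms (ext_term 1 [xi l a, eta l b] :: 'k grass)"
    by (simp add: ext_term_def even_monoms_def)
qed

lemma ev_deriv_pair: "ev_deriv (ev_pair l a b) = ev_pair l (Suc a) b + ev_pair l a (Suc b)"
  by transfer (simp add: gderiv_ext shift_def xi_def eta_def numeral_2_eq_2 lessThan_Suc)

definition omega_deriv :: "nat \<Rightarrow> nat \<Rightarrow> 'k::comm_ring_1 ev_grass" where
  "omega_deriv m n = (\<Sum>l<m - 1. \<Sum>a\<le>n. of_nat (n choose a) * ev_pair l a (n - a))"

lemma pascal_sum:
  fixes E :: "nat \<Rightarrow> nat \<Rightarrow> 'a::comm_semiring_1"
  shows "(\<Sum>a\<le>n. of_nat (n choose a) * (E (Suc a) (n - a) + E a (Suc (n - a))))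
       = (\<Sum>a\<le>Suc n. of_nat (Suc n choose a) * E a (Suc n - a))"
proof -
  have A: "(\<Sum>a\<le>n. of_nat (n choose a) * E a (Suc (n - a))) = E 0 (Suc n) + (\<Sum>a\<le>n. of_nat (n choose Suc a) * E (Suc a) (n - a))"
  proof -
    have "(\<Sum>a\<le>n. of_nat (n choose a) * E a (Suc (n - a))) = (\<Sum>a\<le>Suc n. of_nat (n choose a) * E a (Suc n - a))"
      by (simp add: Suc_diff_le binomial_eq_0)
    also have "\<dots> = E 0 (Suc n) + (\<Sum>a\<le>n. of_nat (n choose Suc a) * E (Suc a) (n - a))"
      by (subst sum.atMost_Suc_shift) (simp add: binomial_eq_0)
    finally show ?thesis .
  qed
  have "(\<Sum>a\<le>Suc n. of_nat (Suc n choose a) * E a (Suc n - a)) = E 0 (Suc n) + (\<Sum>a\<le>n. of_nat (Suc n choose Suc a) * E (Suc a) (n - a))"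
    by (subst sum.atMost_Suc_shift) simp
  also have "\<dots> = E 0 (Suc n) + (\<Sum>a\<le>n. of_nat (n choose a) * E (Suc a) (n - a)) + (\<Sum>a\<le>n. of_nat (n choose Suc a) * E (Suc a) (n - a))"
    by (simp add: sum.distrib distrib_right add.assoc)
  finally show ?thesis using A by (simp add: sum.distrib distrib_left add_ac)
qed

lemma ev_deriv_omega_deriv: "ev_deriv (omega_deriv m n) = omega_deriv m (Suc n)"
proof -
  have "ev_deriv (omega_deriv m n) = (\<Sum>l<m - 1. \<Sum>a\<le>n. of_nat (n choose a) * (ev_pair l (Suc a) (n - a) + ev_pair l a (Suc (n - a))))"
    by (simp add: omega_deriv_def ev_deriv_sum ev_deriv_of_nat_mult ev_deriv_pair)
  also have "\<dots> = omega_deriv m (Suc n)"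
    unfolding omega_deriv_def by (rule sum.cong[OF refl]) (rule pascal_sum[where E = "ev_pair _"])
  finally show ?thesis .
qed

lemma gen_eq_ext_term: "gen x = ext_term 1 [x]"
proof -
  have "[x] = sorted_list_of_set {x}" by simp
  then show ?thesis by (simp only: gen_def ext_term_sorted finite.intros)
qed

lemma rep_omega_deriv_0: "rep_ev (omega_deriv m 0 :: 'k::comm_ring_1 ev_grass) = omega m"
proof -
  have "rep_ev (omega_deriv m 0 :: 'k ev_grass) = (\<Sum>l<m - 1. rep_ev (ev_pair l 0 0 :: 'k ev_grass))"
    unfolding omega_deriv_def by (simp add: rep_ev_sum)
  also have "\<dots> = omega m"
    unfolding omega_def by (rule sum.cong[OF refl]) (simp add: ev_pair.rep_eq gen_eq_ext_term wedge_ext)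
  finally show ?thesis .
qed

lemma power_add_square_zero:
  fixes S t :: "'a::comm_ring_1"
  assumes "t * t = 0"
  shows "(S + t) ^ Suc n = S ^ Suc n + of_nat (Suc n) * S ^ n * t"
proof (induction n)
  case 0 then show ?case by simp
next
  case (Suc n)
  have "(S + t) ^ Suc (Suc n) = (S + t) ^ Suc n * (S + t)"
    by (rule power_Suc2)
  also have "\<dots> = (S ^ Suc n + of_nat (Suc n) * S ^ n * t) * (S + t)"
    by (simp only: Suc)
  also have "\<dots> = S ^ Suc (Suc n) + of_nat (Suc (Suc n)) * S ^ Suc n * t + of_nat (Suc n) * S ^ n * (t * t)"
    by (simp add: algebra_simps)
  finally show ?case using assms by simp
qed

lemma sum_square_zero_nilpotent:
  fixes t :: "nat \<Rightarrow> 'a::comm_ring_1"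
  assumes "\<And>l. l < k \<Longrightarrow> t l * t l = 0"
  shows "(\<Sum>l<k. t l) ^ Suc k = 0"
  using assms
proof (induction k)
  case 0 then show ?case by simp
next
  case (Suc k)
  have ih: "(\<Sum>l<k. t l) ^ Suc k = 0" using Suc by simp
  have "(\<Sum>l<Suc k. t l) ^ Suc (Suc k) = (\<Sum>l<k. t l) ^ Suc (Suc k) + of_nat (Suc (Suc k)) * (\<Sum>l<k. t l) ^ Suc k * t k"
    using power_add_square_zero[of "t k" "\<Sum>l<k. t l" "Suc k"] Suc.prems by simp
  also have "\<dots> = 0" using ih by (simp add: power_Suc2 del: power_Suc)
  finally show ?case .
qed

lemma ev_pair_square: "ev_pair l a b * ev_pair l a b = (0 :: 'k::comm_ring_1 ev_grass)"
  by transfer (simp only: wedge_ext, simp add: ext_term_def)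

lemma omega_nilpotent: "0 < m \<Longrightarrow> omega_deriv m 0 ^ m = (0 :: 'k::comm_ring_1 ev_grass)"
proof -
  assume "0 < m"
  then have "m = Suc (m - 1)" by simp
  moreover have "omega_deriv m 0 = (\<Sum>l<m - 1. ev_pair l 0 0 :: 'k ev_grass)" by (simp add: omega_deriv_def)
  moreover have "(\<Sum>l<m - 1. ev_pair l 0 0 :: 'k ev_grass) ^ Suc (m - 1) = 0"
    by (rule sum_square_zero_nilpotent) (rule ev_pair_square)
  ultimately show ?thesis by simp
qed

definition supp_in_V :: "nat \<Rightarrow> 'k::comm_ring_1 ev_grass \<Rightarrow> bool" where
  "supp_in_V m x \<longleftrightarrow> (\<forall>S\<in>Poly_Mapping.keys (rep_ev x). S \<subseteq> basis_V m \<and> S \<noteq> {})"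

lemma supp_in_V_zero: "supp_in_V m 0" by (simp add: supp_in_V_def zero_ev_grass.rep_eq)

lemma supp_in_V_add:
  assumes gx: "supp_in_V m x" and gy: "supp_in_V m y"
  shows "supp_in_V m (x + y)"
  unfolding supp_in_V_def
proof
  fix S assume S: "S \<in> Poly_Mapping.keys (rep_ev (x + y))"
  have "S \<in> Poly_Mapping.keys (rep_ev x) \<union> Poly_Mapping.keys (rep_ev y)"
    using keys_add S unfolding plus_ev_grass.rep_eq by (rule subsetD)
  then show "S \<subseteq> basis_V m \<and> S \<noteq> {}" using gx gy unfolding supp_in_V_def by blast
qed

lemma supp_in_V_mult:
  assumes "supp_in_V m x" "supp_in_V m y"
  shows "supp_in_V m (x * y)"
  unfolding supp_in_V_def times_ev_grass.rep_eq
proof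
  fix U assume "U \<in> Poly_Mapping.keys (wedge (rep_ev x) (rep_ev y))"
  then obtain S T where "U = S \<union> T" "S \<in> Poly_Mapping.keys (rep_ev x)" "T \<in> Poly_Mapping.keys (rep_ev y)"
    by (rule keys_wedgeE[OF finite_monoms_rep_ev finite_monoms_rep_ev])
  then show "U \<subseteq> basis_V m \<and> U \<noteq> {}" using assms by (auto simp: supp_in_V_def)
qed

lemma supp_in_V_const_mult: "supp_in_V m x \<Longrightarrow> supp_in_V m (ev_const c * x)"
  unfolding supp_in_V_def rep_ev_const_mult
  by (metis (no_types, lifting) lookup_gscal in_keys_iff mult_zero_right)

lemma supp_in_V_sum: "(\<And>i. i \<in> A \<Longrightarrow> supp_in_V m (f i)) \<Longrightarrow> supp_in_V m (sum f A)"
  by (induction A rule: infinite_finite_induct) (simp_all add: supp_in_V_zero supp_in_V_add)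

lemma supp_in_V_prod: "finite A \<Longrightarrow> A \<noteq> {} \<Longrightarrow> (\<And>i. i \<in> A \<Longrightarrow> supp_in_V m (f i)) \<Longrightarrow> supp_in_V m (prod f A)"
  by (induction A rule: finite_ne_induct) (simp_all add: supp_in_V_mult)

lemma supp_in_V_power: "supp_in_V m x \<Longrightarrow> 0 < k \<Longrightarrow> supp_in_V m (x ^ k)"
proof (induction k)
  case (Suc k) then show ?case by (cases k) (simp_all add: supp_in_V_mult)
qed simp

lemma supp_in_V_pair: "l < m - 1 \<Longrightarrow> supp_in_V m (ev_pair l a b)"
  unfolding supp_in_V_def ev_pair.rep_eq using keys_ext_term[of 1 "[xi l a, eta l b]"]
  by (auto simp: basis_V_def xi_def eta_def split: if_splits)

lemma supp_in_V_omega_deriv: "supp_in_V m (omega_deriv m n)"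
  unfolding omega_deriv_def
proof (intro supp_in_V_sum)
  fix l a assume "l \<in> {..<m - 1}"
  then have "supp_in_V m (ev_pair l a (n - a))" by (simp add: supp_in_V_pair)
  then show "supp_in_V m (of_nat (n choose a) * ev_pair l a (n - a))" unfolding of_nat_ev_grass by (rule supp_in_V_const_mult)
qed

section \<open>Differential polynomials\<close>

abbreviation var_exp :: "nat \<Rightarrow> nat \<Rightarrow>\<^sub>0 nat" where "var_exp n \<equiv> Poly_Mapping.single n 1"

lemma dderiv_as_sum_keys: "dderiv p = (\<Sum>\<mu>\<in>Poly_Mapping.keys p. (\<lambda>\<mu> a. \<Sum>i\<in>Poly_Mapping.keys \<mu>.
      Poly_Mapping.single (\<mu> - var_exp i + var_exp (Suc i)) (a * of_nat (Poly_Mapping.lookup \<mu> i))) \<mu> (Poly_Mapping.lookup p \<mu>))"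
  by (simp add: dderiv_def)

lemma dderiv_add: "dderiv (p + q) = dderiv p + dderiv q"
  unfolding dderiv_as_sum_keys by (rule sum_keys_lookup_add) (simp_all add: distrib_right single_add sum.distrib)

lemma dderiv_zero[simp]: "dderiv 0 = 0" by (simp add: dderiv_def)

lemma dderiv_single: "dderiv (Poly_Mapping.single \<mu> a) = (\<Sum>i\<in>Poly_Mapping.keys \<mu>.
      Poly_Mapping.single (\<mu> - var_exp i + var_exp (Suc i)) (a * of_nat (Poly_Mapping.lookup \<mu> i)))"
  unfolding dderiv_as_sum_keys by (rule sum_keys_lookup_single) simp

lemma var_exp_shift_add:
  assumes "i \<in> Poly_Mapping.keys \<mu>"
  shows "\<mu> - var_exp i + var_exp (Suc i) + \<nu> = \<mu> + \<nu> - var_exp i + var_exp (Suc i)"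
  using assms by (intro poly_mapping_eqI) (auto simp: lookup_add lookup_minus lookup_single in_keys_iff when_def)

lemma dderiv_single_mult_single:
  fixes a b :: "'k::comm_ring_1"
  shows "dderiv (Poly_Mapping.single \<mu> a) * Poly_Mapping.single \<nu> b =
    (\<Sum>i\<in>Poly_Mapping.keys \<mu> \<union> Poly_Mapping.keys \<nu>.
       Poly_Mapping.single (\<mu> + \<nu> - var_exp i + var_exp (Suc i)) (a * b * of_nat (Poly_Mapping.lookup \<mu> i)))"
proof -
  have "dderiv (Poly_Mapping.single \<mu> a) * Poly_Mapping.single \<nu> b =
      (\<Sum>i\<in>Poly_Mapping.keys \<mu>. Poly_Mapping.single (\<mu> - var_exp i + var_exp (Suc i))
         (a * of_nat (Poly_Mapping.lookup \<mu> i)) * Poly_Mapping.single \<nu> b)"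
    by (simp only: dderiv_single sum_distrib_right)
  also have "\<dots> = (\<Sum>i\<in>Poly_Mapping.keys \<mu>.
      Poly_Mapping.single (\<mu> + \<nu> - var_exp i + var_exp (Suc i)) (a * b * of_nat (Poly_Mapping.lookup \<mu> i)))"
  proof (rule sum.cong[OF refl])
    fix i assume i: "i \<in> Poly_Mapping.keys \<mu>"
    show "Poly_Mapping.single (\<mu> - var_exp i + var_exp (Suc i)) (a * of_nat (Poly_Mapping.lookup \<mu> i)) * Poly_Mapping.single \<nu> b =
        Poly_Mapping.single (\<mu> + \<nu> - var_exp i + var_exp (Suc i)) (a * b * of_nat (Poly_Mapping.lookup \<mu> i))"
      unfolding mult_single var_exp_shift_add[OF i] by (simp add: ac_simps)
  qed
  also have "\<dots> = (\<Sum>i\<in>Poly_Mapping.keys \<mu> \<union> Poly_Mapping.keys \<nu>.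
      Poly_Mapping.single (\<mu> + \<nu> - var_exp i + var_exp (Suc i)) (a * b * of_nat (Poly_Mapping.lookup \<mu> i)))"
    by (rule sum.mono_neutral_left) (auto simp: in_keys_iff)
  finally show ?thesis .
qed

lemma dderiv_mult_single:
  fixes a b :: "'k::comm_ring_1"
  shows "dderiv (Poly_Mapping.single \<mu> a * Poly_Mapping.single \<nu> b) =
    dderiv (Poly_Mapping.single \<mu> a) * Poly_Mapping.single \<nu> b + Poly_Mapping.single \<mu> a * dderiv (Poly_Mapping.single \<nu> b)"
proof -
  have "Poly_Mapping.single \<mu> a * dderiv (Poly_Mapping.single \<nu> b) = dderiv (Poly_Mapping.single \<nu> b) * Poly_Mapping.single \<mu> a"
    by (rule mult.commute)
  also have "\<dots> = (\<Sum>i\<in>Poly_Mapping.keys \<mu> \<union> Poly_Mapping.keys \<nu>.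
         Poly_Mapping.single (\<mu> + \<nu> - var_exp i + var_exp (Suc i)) (a * b * of_nat (Poly_Mapping.lookup \<nu> i)))"
    by (simp only: dderiv_single_mult_single add.commute[of \<nu> \<mu>] mult.commute[of b a] Un_commute)
  finally have B: "Poly_Mapping.single \<mu> a * dderiv (Poly_Mapping.single \<nu> b) = \<dots>" .
  show ?thesis
    unfolding B dderiv_single_mult_single
    by (simp add: mult_single dderiv_single keys_add_nat lookup_add single_add distrib_left sum.distrib)
qed

lemma dderiv_mult: "dderiv (p * q) = dderiv p * q + p * dderiv (q :: 'k::comm_ring_1 dpoly)"
proof (induction p rule: poly_mapping_induct_keys)
  case (single \<mu> a)
  show ?case
    by (induction q rule: poly_mapping_induct_keys) (simp_all add: dderiv_mult_single distrib_left dderiv_add)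
qed (simp_all add: distrib_right dderiv_add)

lemma dderiv_var_exp: "dderiv (Poly_Mapping.single (var_exp n) (1::'k::comm_ring_1)) = Poly_Mapping.single (var_exp (Suc n)) 1"
  by (simp add: dderiv_single)

lemma lookup_dderiv: "Poly_Mapping.lookup (dderiv p) \<nu> = (\<Sum>\<mu>\<in>Poly_Mapping.keys p. \<Sum>i\<in>Poly_Mapping.keys \<mu>.
   (if \<mu> - var_exp i + var_exp (Suc i) = \<nu> then Poly_Mapping.lookup p \<mu> * of_nat (Poly_Mapping.lookup \<mu> i) else 0))"
  by (simp add: dderiv_def lookup_sum lookup_single when_def)

lemma keys_dderiv: "\<nu> \<in> Poly_Mapping.keys (dderiv p)
    \<Longrightarrow> \<exists>\<mu>\<in>Poly_Mapping.keys p. \<exists>i\<in>Poly_Mapping.keys \<mu>. \<nu> = \<mu> - var_exp i + var_exp (Suc i)"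
proof (rule ccontr)
  assume a: "\<nu> \<in> Poly_Mapping.keys (dderiv p)"
    and b: "\<not> (\<exists>\<mu>\<in>Poly_Mapping.keys p. \<exists>i\<in>Poly_Mapping.keys \<mu>. \<nu> = \<mu> - var_exp i + var_exp (Suc i))"
  have "Poly_Mapping.lookup (dderiv p) \<nu> = 0" unfolding lookup_dderiv
  proof (intro sum.neutral ballI)
    fix \<mu> i assume "\<mu> \<in> Poly_Mapping.keys p" "i \<in> Poly_Mapping.keys \<mu>"
    then have "\<mu> - var_exp i + var_exp (Suc i) \<noteq> \<nu>" using b by blast
    then show "(if \<mu> - var_exp i + var_exp (Suc i) = \<nu> then Poly_Mapping.lookup p \<mu> * of_nat (Poly_Mapping.lookup \<mu> i) else 0) = 0" by simp
  qed
  then show False using a by (simp add: in_keys_iff)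
qed

definition deg :: "(nat \<Rightarrow>\<^sub>0 nat) \<Rightarrow> nat" where
  "deg \<mu> = sum (Poly_Mapping.lookup \<mu>) (Poly_Mapping.keys \<mu>)"

lemma deg_add: "deg (\<mu> + \<nu>) = deg \<mu> + deg \<nu>"
proof -
  let ?K = "Poly_Mapping.keys \<mu> \<union> Poly_Mapping.keys \<nu>"
  have s: "deg x = sum (Poly_Mapping.lookup x) ?K" if "Poly_Mapping.keys x \<subseteq> ?K" for x
    unfolding deg_def by (rule sum.mono_neutral_left) (use that in \<open>auto simp: in_keys_iff\<close>)
  show ?thesis by (simp add: s keys_add_nat lookup_add sum.distrib)
qed

lemma deg_var_exp[simp]: "deg (Poly_Mapping.single n (Suc 0)) = 1" by (simp add: deg_def)

lemma deg_zero_iff: "deg \<mu> = 0 \<longleftrightarrow> \<mu> = 0"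
  by (auto simp: deg_def in_keys_iff poly_mapping_eqI)

lemma zero_notin_keys_kplus: "p \<in> kplus \<Longrightarrow> 0 \<notin> Poly_Mapping.keys p"
  by (simp add: kplus_def in_keys_iff)

lemma kplus_mult: "p \<in> kplus \<Longrightarrow> q * p \<in> kplus"
proof -
  assume p: "p \<in> kplus"
  have "0 \<notin> Poly_Mapping.keys (q * p)"
  proof
    assume "0 \<in> Poly_Mapping.keys (q * p)"
    then obtain a b where "0 = a + b" "a \<in> Poly_Mapping.keys q" "b \<in> Poly_Mapping.keys p"
      using keys_mult[of q p] by blast
    then have "b = 0" using poly_mapping_nat_add_eq_0D[of b a] by (simp add: add.commute)
    then show False using \<open>b \<in> _\<close> zero_notin_keys_kplus[OF p] by simp
  qed
  then show ?thesis by (simp add: kplus_def in_keys_iff)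
qed

lemma kplus_add: "p \<in> kplus \<Longrightarrow> q \<in> kplus \<Longrightarrow> p + q \<in> kplus"
  by (simp add: kplus_def lookup_add)

lemma kplus_dscal: "p \<in> kplus \<Longrightarrow> dscal c p \<in> kplus"
  by (simp add: dscal_def kplus_mult)

lemma kplus_zero: "0 \<in> kplus" by (simp add: kplus_def)

lemma var_exp_neq_0: "Poly_Mapping.single n (1::nat) \<noteq> 0"
proof
  assume "Poly_Mapping.single n (1::nat) = 0"
  then have "Poly_Mapping.lookup (Poly_Mapping.single n (1::nat)) n = 0" by simp
  then show False by simp
qed

lemma kplus_dvar: "dvar n \<in> kplus"
  using var_exp_neq_0[of n] by (simp add: kplus_def dvar_def lookup_single when_def)

lemma kplus_dvar_pow: "0 < k \<Longrightarrow> dvar n ^ k \<in> kplus"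
proof (induction k)
  case (Suc k) then show ?case
    by (cases k) (simp_all add: kplus_dvar kplus_mult)
qed simp

lemma kplus_dderiv: "dderiv p \<in> kplus"
proof -
  have "0 \<notin> Poly_Mapping.keys (dderiv p)"
  proof
    assume "0 \<in> Poly_Mapping.keys (dderiv p)"
    then obtain \<mu> i where "\<mu> - var_exp i + var_exp (Suc i) = 0" using keys_dderiv by metis
    then have "Poly_Mapping.lookup (\<mu> - var_exp i + var_exp (Suc i)) (Suc i) = 0" by simp
    then show False by (simp add: lookup_add)
  qed
  then show ?thesis by (simp add: kplus_def in_keys_iff)
qed

lemma dscal_single: "dscal c (Poly_Mapping.single \<nu> (a::'k::comm_ring_1)) = Poly_Mapping.single \<nu> (c * a)"
  by (simp add: dscal_def mult_single)

lemma lookup_dscal: "Poly_Mapping.lookup (dscal c p) \<nu> = c * Poly_Mapping.lookup p \<nu>"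
  unfolding dscal_def mult_map_scale_conv_mult[symmetric] by transfer (simp add: when_def)

lemma dscal_add: "dscal c (p + q) = dscal c p + dscal c q" by (simp add: dscal_def distrib_left)

lemma diff_ideal_gen_minimal:
  assumes "I \<subseteq> kplus" "dvar 0 ^ m \<in> I" "0 \<in> I" "\<And>p q. p \<in> I \<Longrightarrow> q \<in> I \<Longrightarrow> p + q \<in> I"
    "\<And>c p. p \<in> I \<Longrightarrow> dscal c p \<in> I" "\<And>p q. p \<in> I \<Longrightarrow> q \<in> kplus \<Longrightarrow> q * p \<in> I"
    "\<And>p. p \<in> I \<Longrightarrow> dderiv p \<in> I"
  shows "diff_ideal_gen m \<subseteq> I"
  unfolding diff_ideal_gen_def using assms by (intro Inter_lower) auto

lemma diff_ideal_gen_generator: "dvar 0 ^ m \<in> diff_ideal_gen m"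
  by (auto simp: diff_ideal_gen_def)

lemma diff_ideal_gen_zero: "0 \<in> diff_ideal_gen m"
  by (auto simp: diff_ideal_gen_def)

lemma diff_ideal_gen_add: "p \<in> diff_ideal_gen m \<Longrightarrow> q \<in> diff_ideal_gen m \<Longrightarrow> p + q \<in> diff_ideal_gen m"
  by (auto simp: diff_ideal_gen_def)

lemma diff_ideal_gen_dscal: "p \<in> diff_ideal_gen m \<Longrightarrow> dscal c p \<in> diff_ideal_gen m"
  by (auto simp: diff_ideal_gen_def)

lemma diff_ideal_gen_mult: "p \<in> diff_ideal_gen m \<Longrightarrow> q \<in> kplus \<Longrightarrow> q * p \<in> diff_ideal_gen m"
  by (auto simp: diff_ideal_gen_def)

lemma diff_ideal_gen_dderiv: "p \<in> diff_ideal_gen m \<Longrightarrow> dderiv p \<in> diff_ideal_gen m"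
  by (auto simp: diff_ideal_gen_def)

lemma diff_ideal_gen_dderiv_pow: "(dderiv ^^ N) (dvar 0 ^ m) \<in> diff_ideal_gen m"
  by (induction N) (simp_all add: diff_ideal_gen_generator diff_ideal_gen_dderiv)

lemma diff_ideal_gen_single_mult: "p \<in> diff_ideal_gen m \<Longrightarrow> Poly_Mapping.single \<nu> c * p \<in> diff_ideal_gen m"
proof (cases "\<nu> = 0")
  case True
  assume "p \<in> diff_ideal_gen m"
  then show ?thesis using True diff_ideal_gen_dscal by (metis dscal_def)
next
  case False
  assume "p \<in> diff_ideal_gen m"
  moreover have "Poly_Mapping.single \<nu> c \<in> kplus" using False by (simp add: kplus_def lookup_single when_def)
  ultimately show ?thesis by (rule diff_ideal_gen_mult)
qed

section \<open>The homomorphism\<close>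

definition omega_monom :: "nat \<Rightarrow> (nat \<Rightarrow>\<^sub>0 nat) \<Rightarrow> 'k::comm_ring_1 ev_grass" where
  "omega_monom m \<mu> = (\<Prod>n\<in>Poly_Mapping.keys \<mu>. omega_deriv m n ^ Poly_Mapping.lookup \<mu> n)"

lemma omega_monom_superset: "finite K \<Longrightarrow> Poly_Mapping.keys \<mu> \<subseteq> K
    \<Longrightarrow> omega_monom m \<mu> = (\<Prod>n\<in>K. omega_deriv m n ^ Poly_Mapping.lookup \<mu> n)"
  unfolding omega_monom_def by (rule prod.mono_neutral_left) (auto simp: in_keys_iff)

lemma omega_monom_add: "omega_monom m (\<mu> + \<nu>) = omega_monom m \<mu> * omega_monom m \<nu>"
proof -
  let ?K = "Poly_Mapping.keys \<mu> \<union> Poly_Mapping.keys \<nu>"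
  have "omega_monom m (\<mu> + \<nu>) = (\<Prod>n\<in>?K. omega_deriv m n ^ Poly_Mapping.lookup (\<mu> + \<nu>) n)"
    by (rule omega_monom_superset) (auto simp: keys_add_nat)
  also have "\<dots> = (\<Prod>n\<in>?K. omega_deriv m n ^ Poly_Mapping.lookup \<mu> n) * (\<Prod>n\<in>?K. omega_deriv m n ^ Poly_Mapping.lookup \<nu> n)"
    by (simp add: lookup_add power_add prod.distrib)
  also have "\<dots> = omega_monom m \<mu> * omega_monom m \<nu>"
    by (simp add: omega_monom_superset[symmetric])
  finally show ?thesis .
qed

lemma omega_monom_zero[simp]: "omega_monom m 0 = 1" by (simp add: omega_monom_def)

lemma omega_monom_var_exp[simp]: "omega_monom m (var_exp n) = (omega_deriv m n :: 'k::comm_ring_1 ev_grass)" unfolding omega_monom_def by simp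

definition phi :: "nat \<Rightarrow> 'k::comm_ring_1 dpoly \<Rightarrow> 'k ev_grass" where
  "phi m p = (\<Sum>\<mu>\<in>Poly_Mapping.keys p. ev_const (Poly_Mapping.lookup p \<mu>) * omega_monom m \<mu>)"

lemma phi_add: "phi m (p + q) = phi m p + phi m q"
  unfolding phi_def by (rule sum_keys_lookup_add[where f = "\<lambda>\<mu> c. ev_const c * omega_monom m \<mu>"]) (simp_all add: ev_const_add distrib_right)

lemma phi_single: "phi m (Poly_Mapping.single \<mu> c) = ev_const c * omega_monom m \<mu>"
  unfolding phi_def by (rule sum_keys_lookup_single[where f = "\<lambda>\<mu> c. ev_const c * omega_monom m \<mu>"]) simp

lemma phi_zero[simp]: "phi m 0 = 0" by (simp add: phi_def)

lemma phi_mult: "phi m (p * q) = phi m p * phi m q"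
proof (induction p rule: poly_mapping_induct_keys)
  case (single \<mu> a)
  show ?case
  proof (induction q rule: poly_mapping_induct_keys)
    case (single \<nu> b)
    show ?case by (simp add: mult_single phi_single ev_const_mult omega_monom_add ac_simps)
  qed (simp_all add: distrib_left phi_add)
qed (simp_all add: distrib_right phi_add)

lemma phi_one[simp]: "phi m (1 :: 'k::comm_ring_1 dpoly) = 1"
proof -
  have "(1 :: 'k::comm_ring_1 dpoly) = Poly_Mapping.single 0 1" by simp
  then have "phi m (1 :: 'k dpoly) = phi m (Poly_Mapping.single 0 1)" by simp
  then show ?thesis by (simp only: phi_single ev_const_one omega_monom_zero mult_1_left)
qed

lemma phi_dscal: "phi m (dscal c p) = ev_const c * phi m p"
  by (simp add: dscal_def phi_mult phi_single)

lemma phi_dvar: "phi m (dvar n) = (omega_deriv m n :: 'k::comm_ring_1 ev_grass)"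
  by (simp only: dvar_def phi_single ev_const_one omega_monom_var_exp mult_1_left)

lemma phi_power: "phi m (x ^ k) = phi m (x :: 'k::comm_ring_1 dpoly) ^ k"
  by (induction k) (simp_all add: phi_mult)

lemma phi_dderiv_single: "phi m (dderiv (Poly_Mapping.single \<mu> c)) = ev_deriv (phi m (Poly_Mapping.single \<mu> (c :: 'k::comm_ring_1)))"
proof (induction "deg \<mu>" arbitrary: \<mu> c rule: less_induct)
  case less
  show ?case
  proof (cases "\<mu> = 0")
    case True then show ?thesis by (simp add: dderiv_single phi_single)
  next
    case False
    then have "Poly_Mapping.keys \<mu> \<noteq> {}" by (auto simp: in_keys_iff poly_mapping_eq_iff fun_eq_iff)
    then obtain n where n: "n \<in> Poly_Mapping.keys \<mu>" by blast
    define \<mu>' where "\<mu>' = \<mu> - var_exp n"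
    have mu: "\<mu> = \<mu>' + var_exp n" using n unfolding \<mu>'_def
      by (intro poly_mapping_eqI) (auto simp: lookup_add lookup_minus lookup_single in_keys_iff when_def)
    have dl: "deg \<mu>' < deg \<mu>" using mu by (simp add: deg_add)
    have sp: "Poly_Mapping.single \<mu> c = Poly_Mapping.single \<mu>' c * Poly_Mapping.single (var_exp n) 1"
      by (simp add: mult_single mu)
    have y: "phi m (dderiv (Poly_Mapping.single (var_exp n) (1::'k))) = ev_deriv (phi m (Poly_Mapping.single (var_exp n) 1))"
      by (simp only: dderiv_var_exp phi_single ev_const_one omega_monom_var_exp mult_1_left ev_deriv_omega_deriv)
    show ?thesis unfolding sp dderiv_mult phi_add phi_mult less(1)[OF dl] y ev_deriv_mult ..
  qed
qed

lemma phi_dderiv: "phi m (dderiv p) = ev_deriv (phi m (p :: 'k::comm_ring_1 dpoly))"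
  by (induction p rule: poly_mapping_induct_keys) (simp_all add: phi_dderiv_single dderiv_add phi_add ev_deriv_add)

lemma supp_in_V_omega_monom: "\<mu> \<noteq> 0 \<Longrightarrow> supp_in_V m (omega_monom m \<mu>)"
proof -
  assume "\<mu> \<noteq> 0"
  then have ne: "Poly_Mapping.keys \<mu> \<noteq> {}" by (auto simp: in_keys_iff poly_mapping_eq_iff fun_eq_iff)
  show ?thesis unfolding omega_monom_def
    by (rule supp_in_V_prod[OF finite_keys ne]) (simp add: supp_in_V_power supp_in_V_omega_deriv in_keys_iff)
qed

lemma supp_in_V_phi: "p \<in> kplus \<Longrightarrow> supp_in_V m (phi m p)"
  unfolding phi_def
  by (intro supp_in_V_sum supp_in_V_const_mult supp_in_V_omega_monom) (auto simp: kplus_def in_keys_iff)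

lemma phi_Lambda0: "p \<in> kplus \<Longrightarrow> rep_ev (phi m p) \<in> Lambda0 m"
proof -
  assume p: "p \<in> kplus"
  have e: "even_monoms (rep_ev (phi m p))" using rep_ev by simp
  show ?thesis using supp_in_V_phi[OF p, of m] e unfolding Lambda0_def supp_in_V_def even_monoms_def by blast
qed

lemma phi_diff_ideal_gen:
  assumes "0 < m" "p \<in> diff_ideal_gen m"
  shows "phi m p = (0 :: 'k::comm_ring_1 ev_grass)"
proof -
  have "diff_ideal_gen m \<subseteq> {p \<in> kplus. phi m p = (0 :: 'k ev_grass)}"
  proof (rule diff_ideal_gen_minimal)
    show "dvar 0 ^ m \<in> {p \<in> kplus. phi m p = (0 :: 'k ev_grass)}"
      using assms(1) by (simp add: kplus_dvar_pow phi_dvar phi_power omega_nilpotent)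
  qed (auto simp: kplus_add kplus_dscal kplus_mult kplus_dderiv kplus_zero phi_add phi_dscal phi_mult phi_dderiv)
  then show ?thesis using assms(2) by blast
qed

section \<open>Reduction to standard monomials\<close>

definition lin_weight :: "(nat \<Rightarrow> nat) \<Rightarrow> (nat \<Rightarrow>\<^sub>0 nat) \<Rightarrow> nat" where
  "lin_weight f \<mu> = (\<Sum>n\<in>Poly_Mapping.keys \<mu>. Poly_Mapping.lookup \<mu> n * f n)"

lemma lin_weight_superset: "finite K \<Longrightarrow> Poly_Mapping.keys \<mu> \<subseteq> K \<Longrightarrow> lin_weight f \<mu> = (\<Sum>n\<in>K. Poly_Mapping.lookup \<mu> n * f n)"
  unfolding lin_weight_def by (rule sum.mono_neutral_left) (auto simp: in_keys_iff)

lemma lin_weight_add: "lin_weight f (\<mu> + \<nu>) = lin_weight f \<mu> + lin_weight f \<nu>"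
proof -
  let ?K = "Poly_Mapping.keys \<mu> \<union> Poly_Mapping.keys \<nu>"
  have "lin_weight f (\<mu> + \<nu>) = (\<Sum>n\<in>?K. Poly_Mapping.lookup (\<mu> + \<nu>) n * f n)"
    by (rule lin_weight_superset) (auto simp: keys_add_nat)
  also have "\<dots> = (\<Sum>n\<in>?K. Poly_Mapping.lookup \<mu> n * f n) + (\<Sum>n\<in>?K. Poly_Mapping.lookup \<nu> n * f n)"
    by (simp add: lookup_add sum.distrib distrib_right)
  also have "\<dots> = lin_weight f \<mu> + lin_weight f \<nu>" by (simp add: lin_weight_superset[symmetric])
  finally show ?thesis .
qed

lemma lin_weight_single[simp]: "lin_weight f (Poly_Mapping.single n c) = c * f n"
  by (cases "c = 0") (simp_all add: lin_weight_def)

lemma deg_eq_lin_weight: "deg \<mu> = lin_weight (\<lambda>_. 1) \<mu>" by (simp add: deg_def lin_weight_def)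

abbreviation weight where "weight \<equiv> lin_weight (\<lambda>n. n)"
abbreviation sq_weight where "sq_weight \<equiv> lin_weight (\<lambda>n. n * n)"

lemma var_exp_decomp: "i \<in> Poly_Mapping.keys \<mu> \<Longrightarrow> \<mu> = (\<mu> - var_exp i) + var_exp i"
  by (rule poly_mapping_diff_add) (auto simp: lookup_single when_def in_keys_iff)

lemma lin_weight_shift:
  assumes "i \<in> Poly_Mapping.keys \<mu>"
  shows "lin_weight f (\<mu> - var_exp i + var_exp (Suc i)) + f i = lin_weight f \<mu> + f (Suc i)"
proof -
  have "lin_weight f \<mu> = lin_weight f (\<mu> - var_exp i) + f i" using var_exp_decomp[OF assms] lin_weight_add
    by (metis lin_weight_single mult_1)
  then show ?thesis by (simp add: lin_weight_add)
qed

definition nat_coeffs :: "'k::comm_ring_1 dpoly \<Rightarrow> bool" where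
  "nat_coeffs p \<longleftrightarrow> (\<forall>\<gamma>. \<exists>c::nat. Poly_Mapping.lookup p \<gamma> = of_nat c)"

lemma lookup_dderiv_nat_coeffs:
  assumes "\<And>\<gamma>. Poly_Mapping.lookup p \<gamma> = of_nat (f \<gamma>)"
  shows "Poly_Mapping.lookup (dderiv p) \<nu> = of_nat (\<Sum>\<mu>\<in>Poly_Mapping.keys p. \<Sum>i\<in>Poly_Mapping.keys \<mu>.
      (if \<mu> - var_exp i + var_exp (Suc i) = \<nu> then f \<mu> * Poly_Mapping.lookup \<mu> i else 0))"
  by (simp add: lookup_dderiv assms of_nat_sum if_distrib cong: if_cong)

lemma nat_coeffs_dderiv:
  assumes "nat_coeffs p"
  shows "nat_coeffs (dderiv p)"
proof -
  obtain f where "\<And>\<gamma>. Poly_Mapping.lookup p \<gamma> = of_nat (f \<gamma>)" using assms unfolding nat_coeffs_def by metis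
  then show ?thesis unfolding nat_coeffs_def using lookup_dderiv_nat_coeffs by blast
qed

text \<open>Natural-number coefficients cannot cancel in characteristic zero.\<close>

lemma keys_dderiv_nat_coeffs:
  fixes p :: "'k::field_char_0 dpoly"
  assumes "nat_coeffs p" and mu: "\<mu> \<in> Poly_Mapping.keys p" and i: "i \<in> Poly_Mapping.keys \<mu>"
  shows "\<mu> - var_exp i + var_exp (Suc i) \<in> Poly_Mapping.keys (dderiv p)"
proof -
  obtain f where f: "\<And>\<gamma>. Poly_Mapping.lookup p \<gamma> = of_nat (f \<gamma>)" using assms(1) unfolding nat_coeffs_def by metis
  let ?\<nu> = "\<mu> - var_exp i + var_exp (Suc i)"
  let ?g = "\<lambda>\<mu>' i'. if \<mu>' - var_exp i' + var_exp (Suc i') = ?\<nu> then f \<mu>' * Poly_Mapping.lookup \<mu>' i' else 0"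
  have "0 < f \<mu> * Poly_Mapping.lookup \<mu> i" using mu i f[of \<mu>] by (auto simp: in_keys_iff)
  also have "\<dots> \<le> (\<Sum>i'\<in>Poly_Mapping.keys \<mu>. ?g \<mu> i')"
    using member_le_sum[of i "Poly_Mapping.keys \<mu>" "?g \<mu>"] i by simp
  also have "\<dots> \<le> (\<Sum>\<mu>'\<in>Poly_Mapping.keys p. \<Sum>i'\<in>Poly_Mapping.keys \<mu>'. ?g \<mu>' i')"
    using member_le_sum[OF mu, of "\<lambda>\<mu>'. \<Sum>i'\<in>Poly_Mapping.keys \<mu>'. ?g \<mu>' i'"] by simp
  finally show ?thesis unfolding in_keys_iff lookup_dderiv_nat_coeffs[OF f] of_nat_eq_0_iff by linarith
qed

definition gen_deriv :: "nat \<Rightarrow> nat \<Rightarrow> 'k::comm_ring_1 dpoly" where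
  "gen_deriv m N = (dderiv ^^ N) (dvar 0 ^ m)"

lemma dvar_pow: "dvar n ^ k = Poly_Mapping.single (Poly_Mapping.single n k) (1::'k::comm_ring_1)"
proof (induction k)
  case 0 then show ?case by simp
next
  case (Suc k)
  have "dvar n ^ Suc k = dvar n * dvar n ^ k" by simp
  also have "\<dots> = dvar n * Poly_Mapping.single (Poly_Mapping.single n k) (1::'k)" by (simp only: Suc)
  also have "\<dots> = Poly_Mapping.single (var_exp n + Poly_Mapping.single n k) (1::'k)" by (simp only: dvar_def mult_single mult_1)
  also have "var_exp n + Poly_Mapping.single n k = Poly_Mapping.single n (Suc k)" by (simp add: single_add[symmetric])
  finally show ?case .
qed

lemma gen_deriv_Suc: "gen_deriv m (Suc N) = dderiv (gen_deriv m N)" by (simp add: gen_deriv_def)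

lemma gen_deriv_keys: "\<gamma> \<in> Poly_Mapping.keys (gen_deriv m N :: 'k::comm_ring_1 dpoly) \<Longrightarrow> deg \<gamma> = m \<and> weight \<gamma> = N"
proof (induction N arbitrary: \<gamma>)
  case 0 then show ?case by (simp add: gen_deriv_def dvar_pow deg_eq_lin_weight split: if_splits)
next
  case (Suc N)
  then obtain \<mu> i where mu: "\<mu> \<in> Poly_Mapping.keys (gen_deriv m N :: 'k dpoly)" "i \<in> Poly_Mapping.keys \<mu>" "\<gamma> = \<mu> - var_exp i + var_exp (Suc i)"
    using keys_dderiv by (metis gen_deriv_Suc)
  have "deg \<mu> = m" "weight \<mu> = N" using Suc.IH[OF mu(1)] by auto
  then show ?case using lin_weight_shift[OF mu(2), of "\<lambda>_. 1"] lin_weight_shift[OF mu(2), of "\<lambda>n. n"] mu(3)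
    by (simp add: deg_eq_lin_weight)
qed

lemma gen_deriv_nat_coeffs: "nat_coeffs (gen_deriv m N :: 'k::field_char_0 dpoly)"
proof (induction N)
  case 0 then show ?case
    by (auto simp: nat_coeffs_def gen_deriv_def dvar_pow lookup_single when_def intro: exI[of _ 0] exI[of _ 1])
next
  case (Suc N) then show ?case by (simp add: gen_deriv_Suc nat_coeffs_dderiv)
qed

text \<open>The most balanced exponent of degree \<open>m\<close> and weight \<open>N = a m + s\<close>, \<open>s < m\<close>:
  \<open>x\<^sub>a\<^sup>m\<^sup>-\<^sup>s x\<^sub>a\<^sub>+\<^sub>1\<^sup>s\<close>.\<close>

definition lead_exp :: "nat \<Rightarrow> nat \<Rightarrow> nat \<Rightarrow>\<^sub>0 nat" where
  "lead_exp m N = Poly_Mapping.single (N div m) (m - N mod m) + Poly_Mapping.single (Suc (N div m)) (N mod m)"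

lemma lookup_lead_exp: "Poly_Mapping.lookup (lead_exp m N) k = (if k = N div m then m - N mod m else if k = Suc (N div m) then N mod m else 0)"
  by (simp add: lead_exp_def lookup_add lookup_single when_def)

lemma lead_exp_Suc:
  assumes "0 < m"
  shows "lead_exp m (Suc N) = lead_exp m N - var_exp (N div m) + var_exp (Suc (N div m))"
proof (rule poly_mapping_eqI)
  fix k
  have s: "N mod m < m" using assms by simp
  show "Poly_Mapping.lookup (lead_exp m (Suc N)) k = Poly_Mapping.lookup (lead_exp m N - var_exp (N div m) + var_exp (Suc (N div m))) k"
  proof (cases "Suc (N mod m) = m")
    case True
    then have "Suc N mod m = 0" "Suc N div m = Suc (N div m)" by (simp_all add: mod_Suc div_Suc)
    moreover have "m - N mod m = 1" using True by simp
    ultimately show ?thesis using True by (simp add: lookup_lead_exp lookup_add lookup_minus lookup_single when_def)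
  next
    case False
    then have "Suc N mod m = Suc (N mod m)" "Suc N div m = N div m" by (simp_all add: mod_Suc div_Suc)
    then show ?thesis using False s by (simp add: lookup_lead_exp lookup_add lookup_minus lookup_single when_def)
  qed
qed

lemma lead_exp_in_keys: "0 < m \<Longrightarrow> lead_exp m N \<in> Poly_Mapping.keys (gen_deriv m N :: 'k::field_char_0 dpoly)"
proof (induction N)
  case 0
  have "lead_exp m 0 = Poly_Mapping.single 0 m" by (simp add: lead_exp_def)
  then show ?case by (simp add: gen_deriv_def dvar_pow)
next
  case (Suc N)
  have "N div m \<in> Poly_Mapping.keys (lead_exp m N)" using Suc.prems mod_less_divisor[OF Suc.prems, of N] by (simp add: in_keys_iff lookup_lead_exp)
  then show ?case using keys_dderiv_nat_coeffs[OF gen_deriv_nat_coeffs Suc.IH[OF Suc.prems]] Suc.prems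
    by (simp add: gen_deriv_Suc lead_exp_Suc)
qed

lemma deg_lead_exp: "0 < m \<Longrightarrow> deg (lead_exp m N) = m" by (simp add: lead_exp_def deg_eq_lin_weight lin_weight_add)
lemma weight_lead_exp: "0 < m \<Longrightarrow> weight (lead_exp m N) = N"
proof -
  assume m: "0 < m"
  have "weight (lead_exp m N) = (m - N mod m) * (N div m) + N mod m * Suc (N div m)" by (simp add: lead_exp_def lin_weight_add)
  also have "\<dots> = m * (N div m) + N mod m" using m by (simp add: algebra_simps diff_mult_distrib)
  also have "\<dots> = N" by simp
  finally show ?thesis .
qed


lemma sq_weight_identity:
  "int (sq_weight \<gamma>) + int (a * (a + 1)) * int (deg \<gamma>) = int (2 * a + 1) * int (weight \<gamma>)
     + (\<Sum>n\<in>Poly_Mapping.keys \<gamma>. int (Poly_Mapping.lookup \<gamma> n) * ((int n - int a) * (int n - int a - 1)))"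
proof -
  have "int (sq_weight \<gamma>) + int (a * (a + 1)) * int (deg \<gamma>)
      = (\<Sum>n\<in>Poly_Mapping.keys \<gamma>. int (Poly_Mapping.lookup \<gamma> n) * (int n * int n + int a * (int a + 1)))"
    by (simp add: lin_weight_def deg_def of_nat_sum sum_distrib_left sum_distrib_right sum.distrib algebra_simps)
  also have "\<dots> = (\<Sum>n\<in>Poly_Mapping.keys \<gamma>. int (Poly_Mapping.lookup \<gamma> n) * ((2 * int a + 1) * int n)
        + int (Poly_Mapping.lookup \<gamma> n) * ((int n - int a) * (int n - int a - 1)))"
    by (rule sum.cong) (simp_all add: algebra_simps)
  also have "\<dots> = int (2 * a + 1) * int (weight \<gamma>) + (\<Sum>n\<in>Poly_Mapping.keys \<gamma>. int (Poly_Mapping.lookup \<gamma> n) * ((int n - int a) * (int n - int a - 1)))"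
  proof -
    have X: "(\<Sum>n\<in>Poly_Mapping.keys \<gamma>. int (Poly_Mapping.lookup \<gamma> n) * ((2 * int a + 1) * int n)) = int (2 * a + 1) * int (weight \<gamma>)"
      by (simp add: lin_weight_def of_nat_sum sum_distrib_left algebra_simps)
    show ?thesis by (simp only: sum.distrib X)
  qed
  finally show ?thesis .
qed

lemma int_consec_nonneg: "0 \<le> (x::int) * (x - 1)"
  by (cases "x \<le> 0") (simp_all add: mult_nonpos_nonpos)

lemma lin_weight_two_keys: "Poly_Mapping.keys \<gamma> \<subseteq> {a, Suc a}
    \<Longrightarrow> lin_weight f \<gamma> = Poly_Mapping.lookup \<gamma> a * f a + Poly_Mapping.lookup \<gamma> (Suc a) * f (Suc a)"
  by (subst lin_weight_superset[of "{a, Suc a}"]) simp_all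

lemma lead_exp_eqI:
  assumes ks: "Poly_Mapping.keys \<gamma> \<subseteq> {N div m, Suc (N div m)}" and d: "deg \<gamma> = m" and w: "weight \<gamma> = N"
  shows "\<gamma> = lead_exp m N"
proof -
  define a where "a = N div m"
  define s where "s = N mod m"
  have dg: "Poly_Mapping.lookup \<gamma> a + Poly_Mapping.lookup \<gamma> (Suc a) = m"
    using lin_weight_two_keys[OF ks, of "\<lambda>_. 1"] d by (simp add: deg_eq_lin_weight a_def)
  have wg: "Poly_Mapping.lookup \<gamma> a * a + Poly_Mapping.lookup \<gamma> (Suc a) * Suc a = N"
    using lin_weight_two_keys[OF ks, of "\<lambda>n. n"] w by (simp add: a_def)
  have N: "N = m * a + s" by (simp add: a_def s_def)
  have "m * a + Poly_Mapping.lookup \<gamma> (Suc a) = N" using dg wg by (simp add: algebra_simps flip: dg)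
  then have g1: "Poly_Mapping.lookup \<gamma> (Suc a) = s" using N by simp
  then have g0: "Poly_Mapping.lookup \<gamma> a = m - s" using dg by simp
  show ?thesis
  proof (rule poly_mapping_eqI)
    fix k show "Poly_Mapping.lookup \<gamma> k = Poly_Mapping.lookup (lead_exp m N) k"
      using ks g0 g1 by (auto simp: lookup_lead_exp a_def s_def in_keys_iff)
  qed
qed

lemma lead_exp_min:
  assumes m: "0 < m" and d: "deg \<gamma> = m" and w: "weight \<gamma> = N"
  shows "sq_weight (lead_exp m N) \<le> sq_weight \<gamma> \<and> (sq_weight \<gamma> = sq_weight (lead_exp m N) \<longrightarrow> \<gamma> = lead_exp m N)"
proof -
  define a where "a = N div m"
  define h where "h n = (int n - int a) * (int n - int a - 1)" for n
  define H where "H \<gamma> = (\<Sum>n\<in>Poly_Mapping.keys \<gamma>. int (Poly_Mapping.lookup \<gamma> n) * h n)" for \<gamma>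
  have hn: "0 \<le> h n" for n unfolding h_def using int_consec_nonneg[of "int n - int a"] by (simp add: algebra_simps)
  have Hn: "0 \<le> H \<gamma>" unfolding H_def by (intro sum_nonneg) (simp add: hn)
  have Hb: "H (lead_exp m N) = 0"
  proof -
    have "Poly_Mapping.keys (lead_exp m N) \<subseteq> {a, Suc a}" by (auto simp: in_keys_iff lookup_lead_exp a_def split: if_splits)
    then show ?thesis unfolding H_def by (intro sum.neutral) (auto simp: h_def)
  qed
  have eqg: "int (sq_weight \<gamma>) + int (a * (a + 1)) * int m = int (2 * a + 1) * int N + H \<gamma>"
    using sq_weight_identity[of \<gamma> a] d w by (simp add: H_def h_def)
  have eqb: "int (sq_weight (lead_exp m N)) + int (a * (a + 1)) * int m = int (2 * a + 1) * int N + H (lead_exp m N)"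
    using sq_weight_identity[of "lead_exp m N" a] deg_lead_exp[OF m] weight_lead_exp[OF m] by (simp add: H_def h_def)
  have "sq_weight (lead_exp m N) \<le> sq_weight \<gamma>" using eqg eqb Hb Hn by linarith
  moreover have "\<gamma> = lead_exp m N" if eq: "sq_weight \<gamma> = sq_weight (lead_exp m N)"
  proof (rule lead_exp_eqI[OF _ d w])
    have "H \<gamma> = 0" using eqg eqb Hb eq by linarith
    then have z: "\<forall>n\<in>Poly_Mapping.keys \<gamma>. int (Poly_Mapping.lookup \<gamma> n) * h n = 0"
      unfolding H_def by (subst (asm) sum_nonneg_eq_0_iff) (auto simp: hn)
    show "Poly_Mapping.keys \<gamma> \<subseteq> {N div m, Suc (N div m)}"
    proof
      fix n assume "n \<in> Poly_Mapping.keys \<gamma>"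
      then have "h n = 0" using z by (auto simp: in_keys_iff)
      then show "n \<in> {N div m, Suc (N div m)}" unfolding h_def a_def by auto
    qed
  qed
  ultimately show ?thesis by blast
qed

definition standard_exp :: "nat \<Rightarrow> (nat \<Rightarrow>\<^sub>0 nat) \<Rightarrow> bool" where
  "standard_exp m \<mu> \<longleftrightarrow> (\<forall>a. Poly_Mapping.lookup \<mu> a + Poly_Mapping.lookup \<mu> (Suc a) < m)"

definition standard_polys :: "nat \<Rightarrow> 'k::comm_ring_1 dpoly set" where
  "standard_polys m = {q. \<forall>\<nu>\<in>Poly_Mapping.keys q. \<nu> \<noteq> 0 \<and> standard_exp m \<nu>}"

definition standard_mod_ideal :: "nat \<Rightarrow> 'k::comm_ring_1 dpoly set" where
  "standard_mod_ideal m = {q + r | q r. q \<in> standard_polys m \<and> r \<in> diff_ideal_gen m}"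

lemma standard_polys_add:
  assumes "q1 \<in> standard_polys m" "q2 \<in> standard_polys m"
  shows "q1 + q2 \<in> standard_polys m"
  unfolding standard_polys_def mem_Collect_eq
proof
  fix \<nu> assume "\<nu> \<in> Poly_Mapping.keys (q1 + q2)"
  then have "\<nu> \<in> Poly_Mapping.keys q1 \<union> Poly_Mapping.keys q2" by (rule subsetD[OF keys_add])
  then show "\<nu> \<noteq> 0 \<and> standard_exp m \<nu>" using assms unfolding standard_polys_def by blast
qed

lemma standard_polys_dscal: "q \<in> standard_polys m \<Longrightarrow> dscal c q \<in> standard_polys m"
  unfolding standard_polys_def by (auto simp: in_keys_iff lookup_dscal)

lemma standard_mod_ideal_add:
  assumes "p \<in> standard_mod_ideal m" "p' \<in> standard_mod_ideal m"
  shows "p + p' \<in> standard_mod_ideal m"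
proof -
  obtain q r q' r' where "p = q + r" "p' = q' + r'" "q \<in> standard_polys m" "q' \<in> standard_polys m"
    "r \<in> diff_ideal_gen m" "r' \<in> diff_ideal_gen m"
    using assms unfolding standard_mod_ideal_def by blast
  moreover have "q + r + (q' + r') = (q + q') + (r + r')" by (simp add: add_ac)
  ultimately show ?thesis unfolding standard_mod_ideal_def
    by (intro CollectI exI[of _ "q + q'"] exI[of _ "r + r'"] conjI standard_polys_add diff_ideal_gen_add) simp_all
qed

lemma standard_mod_ideal_dscal:
  assumes "p \<in> standard_mod_ideal m"
  shows "dscal c p \<in> standard_mod_ideal m"
proof -
  obtain q r where "p = q + r" "q \<in> standard_polys m" "r \<in> diff_ideal_gen m"
    using assms unfolding standard_mod_ideal_def by blast
  then show ?thesis unfolding standard_mod_ideal_def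
    by (intro CollectI exI[of _ "dscal c q"] exI[of _ "dscal c r"] conjI standard_polys_dscal diff_ideal_gen_dscal)
      (simp_all add: dscal_add)
qed

lemma diff_ideal_gen_subset_standard_mod_ideal: "r \<in> diff_ideal_gen m \<Longrightarrow> r \<in> standard_mod_ideal m"
  unfolding standard_mod_ideal_def by (intro CollectI exI[of _ 0] exI[of _ r]) (simp add: standard_polys_def)

lemma standard_mod_ideal_sum:
  "(\<And>i. i \<in> A \<Longrightarrow> f i \<in> standard_mod_ideal m) \<Longrightarrow> sum f A \<in> standard_mod_ideal m"
  by (induction A rule: infinite_finite_induct)
    (simp_all add: standard_mod_ideal_add diff_ideal_gen_subset_standard_mod_ideal diff_ideal_gen_zero)

lemma standard_monom_in_standard_mod_ideal:
  "\<mu> \<noteq> 0 \<Longrightarrow> standard_exp m \<mu> \<Longrightarrow> Poly_Mapping.single \<mu> 1 \<in> standard_mod_ideal m"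
  unfolding standard_mod_ideal_def
  by (intro CollectI exI[of _ "Poly_Mapping.single \<mu> 1"] exI[of _ 0]) (simp add: standard_polys_def diff_ideal_gen_zero)

lemma single_add_eq_mult_sum:
  fixes r :: "'k::field dpoly"
  assumes c: "Poly_Mapping.lookup r \<beta> \<noteq> 0"
  shows "Poly_Mapping.single (\<nu> + \<beta>) 1 = Poly_Mapping.single \<nu> (1 / Poly_Mapping.lookup r \<beta>) * r
    + (\<Sum>\<gamma>\<in>Poly_Mapping.keys r - {\<beta>}.
         dscal (- Poly_Mapping.lookup r \<gamma> / Poly_Mapping.lookup r \<beta>) (Poly_Mapping.single (\<nu> + \<gamma>) 1))"
proof -
  let ?c = "Poly_Mapping.lookup r \<beta>"
  have "(\<Sum>\<gamma>\<in>Poly_Mapping.keys r. Poly_Mapping.single (\<nu> + \<gamma>) (Poly_Mapping.lookup r \<gamma> / ?c)) =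
      Poly_Mapping.single \<nu> (1 / ?c) * (\<Sum>\<gamma>\<in>Poly_Mapping.keys r. Poly_Mapping.single \<gamma> (Poly_Mapping.lookup r \<gamma>))"
    by (simp add: sum_distrib_left mult_single)
  also have "(\<Sum>\<gamma>\<in>Poly_Mapping.keys r. Poly_Mapping.single \<gamma> (Poly_Mapping.lookup r \<gamma>)) = r"
    by (rule poly_mapping_sum_single[symmetric])
  finally have "Poly_Mapping.single \<nu> (1 / ?c) * r =
      (\<Sum>\<gamma>\<in>Poly_Mapping.keys r. Poly_Mapping.single (\<nu> + \<gamma>) (Poly_Mapping.lookup r \<gamma> / ?c))" ..
  also have "\<dots> = Poly_Mapping.single (\<nu> + \<beta>) 1
      + (\<Sum>\<gamma>\<in>Poly_Mapping.keys r - {\<beta>}. Poly_Mapping.single (\<nu> + \<gamma>) (Poly_Mapping.lookup r \<gamma> / ?c))"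
    using c by (simp add: sum.remove in_keys_iff)
  finally show ?thesis by (simp add: dscal_single single_uminus sum_negf)
qed

lemma sq_weight_le: "sq_weight \<rho> \<le> weight \<rho> * weight \<rho>"
proof -
  have n: "n \<le> weight \<rho>" if "n \<in> Poly_Mapping.keys \<rho>" for n
  proof -
    have "n \<le> Poly_Mapping.lookup \<rho> n * n" using that by (auto simp: in_keys_iff)
    also have "\<dots> \<le> weight \<rho>" unfolding lin_weight_def by (rule member_le_sum[OF that]) simp_all
    finally show ?thesis .
  qed
  have "sq_weight \<rho> \<le> (\<Sum>n\<in>Poly_Mapping.keys \<rho>. Poly_Mapping.lookup \<rho> n * (n * weight \<rho>))"
    unfolding lin_weight_def by (intro sum_mono mult_le_mono2 mult_le_mono2) (simp add: n[unfolded lin_weight_def])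
  also have "\<dots> = weight \<rho> * weight \<rho>" by (simp add: lin_weight_def sum_distrib_right mult.assoc)
  finally show ?thesis .
qed

lemma nonstandard_exp_lead_exp:
  assumes "0 < m" "\<not> standard_exp m \<mu>"
  obtains N where "\<And>k. Poly_Mapping.lookup (lead_exp m N) k \<le> Poly_Mapping.lookup \<mu> k"
proof -
  obtain a where a: "m \<le> Poly_Mapping.lookup \<mu> a + Poly_Mapping.lookup \<mu> (Suc a)"
    using assms(2) unfolding standard_exp_def by (auto simp: not_less)
  show ?thesis
  proof (cases "m \<le> Poly_Mapping.lookup \<mu> (Suc a)")
    case True
    have d: "(m * Suc a) div m = Suc a" "(m * Suc a) mod m = 0" using assms(1) by simp_all
    show ?thesis by (rule that[of "m * Suc a"]) (use True in \<open>simp add: lookup_lead_exp d\<close>)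
  next
    case False
    have d: "(m * a + Poly_Mapping.lookup \<mu> (Suc a)) div m = a" "(m * a + Poly_Mapping.lookup \<mu> (Suc a)) mod m = Poly_Mapping.lookup \<mu> (Suc a)"
      using False by simp_all
    show ?thesis by (rule that[of "m * a + Poly_Mapping.lookup \<mu> (Suc a)"]) (use False a in \<open>auto simp add: lookup_lead_exp d\<close>)
  qed
qed

definition sq_weight_gap :: "(nat \<Rightarrow>\<^sub>0 nat) \<Rightarrow> nat" where
  "sq_weight_gap \<mu> = weight \<mu> * weight \<mu> - sq_weight \<mu>"

lemma sq_weight_gap_exchange:
  assumes m: "0 < m" and \<gamma>: "\<gamma> \<in> Poly_Mapping.keys (gen_deriv m N :: 'k::comm_ring_1 dpoly)" "\<gamma> \<noteq> lead_exp m N"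
  shows "\<nu> + \<gamma> \<noteq> 0" "sq_weight_gap (\<nu> + \<gamma>) < sq_weight_gap (\<nu> + lead_exp m N)"
proof -
  have dg: "deg \<gamma> = m" "weight \<gamma> = N" using gen_deriv_keys[OF \<gamma>(1)] by auto
  have "sq_weight (lead_exp m N) < sq_weight \<gamma>" using lead_exp_min[OF m dg] \<gamma>(2) by auto
  then have sq: "sq_weight (\<nu> + lead_exp m N) < sq_weight (\<nu> + \<gamma>)" by (simp add: lin_weight_add)
  have w: "weight (\<nu> + \<gamma>) = weight (\<nu> + lead_exp m N)" using dg by (simp add: weight_lead_exp m lin_weight_add)
  have "deg (\<nu> + \<gamma>) \<noteq> 0" using dg m by (simp add: deg_add)
  then show "\<nu> + \<gamma> \<noteq> 0" by (auto simp: deg_zero_iff)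
  show "sq_weight_gap (\<nu> + \<gamma>) < sq_weight_gap (\<nu> + lead_exp m N)"
    using sq_weight_le[of "\<nu> + \<gamma>"] sq w by (simp add: sq_weight_gap_def)
qed

text \<open>A non-standard monomial is divisible by the leading monomial of some \<open>(x\<^sup>m)\<^sup>(\<^sup>N\<^sup>)\<close>;
  trading it for the other monomials of \<open>(x\<^sup>m)\<^sup>(\<^sup>N\<^sup>)\<close> keeps the weight but raises the square
  weight, which is bounded by the squared weight.\<close>

lemma monom_standard_mod_ideal:
  assumes m: "0 < m"
  shows "\<mu> \<noteq> 0 \<Longrightarrow> Poly_Mapping.single \<mu> (1::'k::field_char_0) \<in> standard_mod_ideal m"
proof (induction "sq_weight_gap \<mu>" arbitrary: \<mu> rule: less_induct)
  case less
  show ?case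
  proof (cases "standard_exp m \<mu>")
    case True
    then show ?thesis using less.prems by (intro standard_monom_in_standard_mod_ideal)
  next
    case False
    obtain N where le: "\<And>k. Poly_Mapping.lookup (lead_exp m N) k \<le> Poly_Mapping.lookup \<mu> k"
      using nonstandard_exp_lead_exp[OF m False] by blast
    define \<nu> where "\<nu> = \<mu> - lead_exp m N"
    have mu: "\<mu> = \<nu> + lead_exp m N" unfolding \<nu>_def by (rule poly_mapping_diff_add[OF le])
    define r :: "'k dpoly" where "r = gen_deriv m N"
    have c: "Poly_Mapping.lookup r (lead_exp m N) \<noteq> 0"
      using lead_exp_in_keys[OF m, of N] by (simp add: r_def in_keys_iff)
    have "Poly_Mapping.single \<nu> (1 / Poly_Mapping.lookup r (lead_exp m N)) * r \<in> standard_mod_ideal m"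
      by (intro diff_ideal_gen_subset_standard_mod_ideal diff_ideal_gen_single_mult)
        (simp add: r_def gen_deriv_def diff_ideal_gen_dderiv_pow)
    moreover have "Poly_Mapping.single (\<nu> + \<gamma>) (1::'k) \<in> standard_mod_ideal m" if "\<gamma> \<in> Poly_Mapping.keys r - {lead_exp m N}" for \<gamma>
    proof -
      have \<gamma>: "\<gamma> \<in> Poly_Mapping.keys (gen_deriv m N :: 'k dpoly)" "\<gamma> \<noteq> lead_exp m N"
        using that by (simp_all add: r_def)
      show ?thesis using sq_weight_gap_exchange[OF m \<gamma>, of \<nu>] less.hyps unfolding mu by blast
    qed
    ultimately show ?thesis
      unfolding mu single_add_eq_mult_sum[OF c]
      by (intro standard_mod_ideal_add standard_mod_ideal_sum standard_mod_ideal_dscal) auto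
  qed
qed

lemma kplus_standard_mod_ideal:
  fixes p :: "'k::field_char_0 dpoly"
  assumes m: "0 < m" and p: "p \<in> kplus"
  shows "p \<in> standard_mod_ideal m"
proof -
  have "p = (\<Sum>\<mu>\<in>Poly_Mapping.keys p. dscal (Poly_Mapping.lookup p \<mu>) (Poly_Mapping.single \<mu> 1))"
    by (subst poly_mapping_sum_single) (simp add: dscal_single)
  also have "\<dots> \<in> standard_mod_ideal m"
    using zero_notin_keys_kplus[OF p]
    by (intro standard_mod_ideal_sum standard_mod_ideal_dscal monom_standard_mod_ideal[OF m]) auto
  finally show ?thesis .
qed

section \<open>A rearrangement inequality\<close>

text \<open>A triple \<open>(l, a, b)\<close> stands for \<open>\<xi>\<^sub>a\<^sup>l \<and> \<eta>\<^sub>b\<^sup>l\<close>. Both sets of a rearrangement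
  match the same \<open>\<xi>\<close>-indices bijectively with the same \<open>\<eta>\<close>-indices, and the second one
  does so monotonically within each colour \<open>l\<close>.\<close>

type_synonym triple = "nat \<times> nat \<times> nat"

definition xi_index :: "triple \<Rightarrow> nat \<times> nat" where "xi_index t = (fst t, fst (snd t))"
definition eta_index :: "triple \<Rightarrow> nat \<times> nat" where "eta_index t = (fst t, snd (snd t))"
definition level :: "triple \<Rightarrow> nat" where "level t = fst (snd t) + snd (snd t)"
definition level_sq :: "triple \<Rightarrow> nat" where "level_sq t = level t * level t"
definition increasing_triples :: "triple set \<Rightarrow> bool" where
  "increasing_triples Y0 \<longleftrightarrow> (\<forall>l a b a' b'. (l,a,b) \<in> Y0 \<longrightarrow> (l,a',b') \<in> Y0 \<longrightarrow> a < a' \<longrightarrow> b < b')"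

definition rearrangement :: "triple set \<Rightarrow> triple set \<Rightarrow> bool" where
  "rearrangement Y Y0 \<longleftrightarrow> finite Y \<and> finite Y0 \<and> xi_index ` Y = xi_index ` Y0 \<and> eta_index ` Y = eta_index ` Y0
     \<and> inj_on xi_index Y \<and> inj_on eta_index Y
     \<and> inj_on xi_index Y0 \<and> inj_on eta_index Y0 \<and> increasing_triples Y0"

lemma exchange_sq_less:
  assumes "a2 < a1" "b1 < (b2::nat)"
  shows "(a1+b1)*(a1+b1) + (a2+b2)*(a2+b2) < (a1+b2)*(a1+b2) + (a2+b1)*(a2+b1)"
proof -
  obtain d where d: "a1 = a2 + d" "0 < d" using assms(1) less_imp_add_positive by blast
  obtain e where e: "b2 = b1 + e" "0 < e" using assms(2) less_imp_add_positive by blast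
  have "(a1+b2)*(a1+b2) + (a2+b1)*(a2+b1) = (a1+b1)*(a1+b1) + (a2+b2)*(a2+b2) + 2*d*e"
    unfolding d e by (simp add: algebra_simps)
  moreover have "0 < 2*d*e" using d e by simp
  ultimately show ?thesis by linarith
qed

lemma sum_exchange_less:
  fixes f :: "'a \<Rightarrow> nat"
  assumes "finite Y" "t1 \<in> Y" "t2 \<in> Y" "t1 \<noteq> t2" "t3 \<notin> Y - {t1, t2}" "t4 \<notin> Y - {t1, t2}" "t3 \<noteq> t4"
    and less: "f t1 + f t2 < f t3 + f t4"
  shows "sum f Y < sum f (insert t3 (insert t4 (Y - {t1, t2})))"
proof -
  have "sum f Y = f t1 + sum f (Y - {t1})" using assms(1,2) by (rule sum.remove)
  also have "sum f (Y - {t1}) = f t2 + sum f (Y - {t1} - {t2})" using assms(1-4) by (intro sum.remove) auto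
  also have "Y - {t1} - {t2} = Y - {t1, t2}" by auto
  finally have "sum f Y = f t1 + f t2 + sum f (Y - {t1, t2})" by simp
  moreover have "sum f (insert t3 (insert t4 (Y - {t1, t2}))) = f t3 + f t4 + sum f (Y - {t1, t2})"
    using assms(1,5-7) by simp
  ultimately show ?thesis using less by simp
qed

lemma rearrangement_remove:
  assumes "rearrangement Y Y0" "t \<in> Y" "t \<in> Y0"
  shows "rearrangement (Y - {t}) (Y0 - {t})"
proof -
  have A: "xi_index ` (Y - {t}) = xi_index ` Y - {xi_index t}" "xi_index ` (Y0 - {t}) = xi_index ` Y0 - {xi_index t}"
    "eta_index ` (Y - {t}) = eta_index ` Y - {eta_index t}" "eta_index ` (Y0 - {t}) = eta_index ` Y0 - {eta_index t}"
    using assms inj_on_image_set_diff[of xi_index Y Y "{t}"] inj_on_image_set_diff[of xi_index Y0 Y0 "{t}"]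
      inj_on_image_set_diff[of eta_index Y Y "{t}"] inj_on_image_set_diff[of eta_index Y0 Y0 "{t}"]
    by (simp_all add: rearrangement_def)
  have m: "increasing_triples (Y0 - {t})" using assms(1) unfolding rearrangement_def increasing_triples_def by blast
  have i: "inj_on xi_index (Y - {t})" "inj_on eta_index (Y - {t})" "inj_on xi_index (Y0 - {t})" "inj_on eta_index (Y0 - {t})"
    using assms(1) unfolding rearrangement_def by (meson Diff_subset inj_on_subset)+
  show ?thesis using assms(1) m i unfolding rearrangement_def A by simp
qed

lemma rearrangement_exchange:
  assumes rc: "rearrangement Y Y0" and t1: "(l, a1, b1) \<in> Y" and t2: "(l, a2, b2) \<in> Y"
    and a: "a2 \<noteq> a1" and b: "b1 \<noteq> b2"
  shows "rearrangement (insert (l, a1, b2) (insert (l, a2, b1) (Y - {(l, a1, b1), (l, a2, b2)}))) Y0"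
proof -
  define R where "R = Y - {(l, a1, b1), (l, a2, b2)}"
  have Y: "Y = insert (l, a1, b1) (insert (l, a2, b2) R)" using t1 t2 by (auto simp: R_def)
  have injA: "inj_on xi_index Y" and injB: "inj_on eta_index Y" using rc by (auto simp: rearrangement_def)
  have RA: "xi_index t \<noteq> (l, a1) \<and> xi_index t \<noteq> (l, a2)" if "t \<in> R" for t
  proof -
    have "t \<in> Y" "t \<noteq> (l, a1, b1)" "t \<noteq> (l, a2, b2)" using that by (auto simp: R_def)
    then show ?thesis using injA t1 t2 by (auto simp: inj_on_def xi_index_def)
  qed
  have RB: "eta_index t \<noteq> (l, b1) \<and> eta_index t \<noteq> (l, b2)" if "t \<in> R" for t
  proof -
    have "t \<in> Y" "t \<noteq> (l, a1, b1)" "t \<noteq> (l, a2, b2)" using that by (auto simp: R_def)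
    then show ?thesis using injB t1 t2 by (auto simp: inj_on_def eta_index_def)
  qed
  have injR: "inj_on xi_index R" "inj_on eta_index R" using injA injB by (auto simp: R_def intro: inj_on_subset)
  have "xi_index ` insert (l, a1, b2) (insert (l, a2, b1) R) = xi_index ` Y"
    "eta_index ` insert (l, a1, b2) (insert (l, a2, b1) R) = eta_index ` Y"
    unfolding Y by (auto simp: xi_index_def eta_index_def)
  moreover have "inj_on xi_index (insert (l, a1, b2) (insert (l, a2, b1) R))"
    using injR RA a by (auto simp: xi_index_def)
  moreover have "inj_on eta_index (insert (l, a1, b2) (insert (l, a2, b1) R))"
    using injR RB b by (auto simp: eta_index_def)
  ultimately show ?thesis using rc by (simp add: rearrangement_def R_def)
qed

lemma increasing_triples_max:
  assumes "finite Y0" "(l, a0, b0) \<in> Y0" "inj_on xi_index Y0" "increasing_triples Y0"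
  obtains a1 b1 where "(l, a1, b1) \<in> Y0" "\<And>a b. (l, a, b) \<in> Y0 \<Longrightarrow> a \<le> a1 \<and> b \<le> b1"
proof -
  define A where "A = {a. \<exists>b. (l, a, b) \<in> Y0}"
  have "A \<subseteq> (\<lambda>t. fst (snd t)) ` Y0" by (force simp: A_def)
  then have fA: "finite A" using assms(1) finite_subset by blast
  have "Max A \<in> A" using fA assms(2) by (intro Max_in) (auto simp: A_def)
  then obtain b1 where t: "(l, Max A, b1) \<in> Y0" by (auto simp: A_def)
  have maxa: "a \<le> Max A" if "(l, a, b) \<in> Y0" for a b
  proof -
    have "a \<in> A" using that by (auto simp: A_def)
    then show ?thesis using fA by simp
  qed
  have maxb: "b \<le> b1" if tb: "(l, a, b) \<in> Y0" for a b
  proof (cases "a < Max A")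
    case True then show ?thesis using assms(4) tb t by (auto simp: increasing_triples_def intro: less_imp_le)
  next
    case False
    then have "xi_index (l, a, b) = xi_index (l, Max A, b1)" using maxa[OF tb] by (simp add: xi_index_def)
    then have "(l, a, b) = (l, Max A, b1)" using assms(3) tb t by (auto simp: inj_on_def)
    then show ?thesis by simp
  qed
  show ?thesis using that t maxa maxb by blast
qed

lemma rearrangement_partners:
  assumes rc: "rearrangement Y Y0" and ts: "(l, a1, b1) \<in> Y0"
    and max: "\<And>a b. (l, a, b) \<in> Y0 \<Longrightarrow> a \<le> a1 \<and> b \<le> b1"
  obtains a2 b2 where "(l, a1, b2) \<in> Y" "(l, a2, b1) \<in> Y" "b2 = b1 \<or> a2 < a1 \<and> b2 < b1"
proof -
  have "(l, a1) \<in> xi_index ` Y" "(l, b1) \<in> eta_index ` Y"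
    using ts rc unfolding rearrangement_def by (force simp: xi_index_def eta_index_def)+
  then obtain b2 a2 where t1: "(l, a1, b2) \<in> Y" and t2: "(l, a2, b1) \<in> Y"
    by (auto simp: xi_index_def eta_index_def)
  have "a2 < a1 \<and> b2 < b1" if ne: "b2 \<noteq> b1"
  proof -
    have "a2 \<noteq> a1"
    proof
      assume "a2 = a1"
      then have "xi_index (l, a1, b2) = xi_index (l, a2, b1)" by (simp add: xi_index_def)
      then have "(l, a1, b2) = (l, a2, b1)" using rc t1 t2 by (auto simp: rearrangement_def inj_on_def)
      then show False using ne by simp
    qed
    moreover have "(l, a2) \<in> xi_index ` Y0" "(l, b2) \<in> eta_index ` Y0"
      using t1 t2 rc unfolding rearrangement_def by (force simp: xi_index_def eta_index_def)+
    ultimately show ?thesis using max ne by (auto simp: xi_index_def eta_index_def intro: le_neq_implies_less)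
  qed
  then show ?thesis using that t1 t2 by blast
qed

lemma rearrangement_exchange_sum_less:
  assumes rc: "rearrangement Y Y0" and t1: "(l, a1, b2) \<in> Y" and t2: "(l, a2, b1) \<in> Y"
    and a2: "a2 < a1" and b2: "b2 < b1"
  shows "sum level_sq Y < sum level_sq (insert (l, a1, b1) (insert (l, a2, b2) (Y - {(l, a1, b2), (l, a2, b1)})))"
proof (rule sum_exchange_less[OF _ t1 t2])
  have inj: "inj_on xi_index Y" using rc by (simp add: rearrangement_def)
  show "(l, a1, b1) \<notin> Y - {(l, a1, b2), (l, a2, b1)}"
    using inj_onD[OF inj, of "(l, a1, b1)" "(l, a1, b2)"] t1 by (auto simp: xi_index_def)
  show "(l, a2, b2) \<notin> Y - {(l, a1, b2), (l, a2, b1)}"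
    using inj_onD[OF inj, of "(l, a2, b2)" "(l, a2, b1)"] t2 by (auto simp: xi_index_def)
  show "level_sq (l, a1, b2) + level_sq (l, a2, b1) < level_sq (l, a1, b1) + level_sq (l, a2, b2)"
    using exchange_sq_less[OF a2 b2] by (simp add: level_sq_def level_def)
qed (use rc a2 b2 in \<open>auto simp: rearrangement_def\<close>)

lemma rearrangement_inequality:
  "rearrangement Y Y0 \<Longrightarrow> sum level_sq Y \<le> sum level_sq Y0 \<and> (sum level_sq Y = sum level_sq Y0 \<longrightarrow> Y = Y0)"
proof (induction "card Y0" arbitrary: Y Y0 rule: less_induct)
  case less
  note rc = less.prems
  have fin: "finite Y" "finite Y0" using rc by (auto simp: rearrangement_def)
  show ?case
  proof (cases "Y0 = {}")
    case True
    then show ?thesis using rc by (auto simp: rearrangement_def)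
  next
    case False
    then obtain l a0 b0 where t0: "(l, a0, b0) \<in> Y0" by (metis prod_cases3 ex_in_conv)
    have "inj_on xi_index Y0" "increasing_triples Y0" using rc by (simp_all add: rearrangement_def)
    then obtain a1 b1 where ts: "(l, a1, b1) \<in> Y0" and max: "\<And>a b. (l, a, b) \<in> Y0 \<Longrightarrow> a \<le> a1 \<and> b \<le> b1"
      using increasing_triples_max[OF fin(2) t0] by blast
    have common: "sum level_sq Y' \<le> sum level_sq Y0 \<and> (sum level_sq Y' = sum level_sq Y0 \<longrightarrow> Y' = Y0)"
      if r': "rearrangement Y' Y0" and tY': "(l, a1, b1) \<in> Y'" for Y'
    proof -
      have "card (Y0 - {(l, a1, b1)}) < card Y0" using ts fin by (meson card_Diff1_less)
      note ih = less.hyps[OF this rearrangement_remove[OF r' tY' ts]]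
      have "finite Y'" using r' by (simp add: rearrangement_def)
      then have "sum level_sq Y' = level_sq (l, a1, b1) + sum level_sq (Y' - {(l, a1, b1)})"
        using tY' by (simp add: sum.remove)
      moreover have "sum level_sq Y0 = level_sq (l, a1, b1) + sum level_sq (Y0 - {(l, a1, b1)})"
        using ts fin by (simp add: sum.remove)
      ultimately show ?thesis using ih tY' ts by auto
    qed
    obtain a2 b2 where t1: "(l, a1, b2) \<in> Y" and t2: "(l, a2, b1) \<in> Y"
      and cases: "b2 = b1 \<or> a2 < a1 \<and> b2 < b1"
      by (rule rearrangement_partners[OF rc ts max])
    show ?thesis
    proof (cases "b2 = b1")
      case True
      then show ?thesis using common[OF rc] t1 by simp
    next
      case False
      then have a2: "a2 < a1" and b2: "b2 < b1" using cases by auto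
      define Y2 where "Y2 = insert (l, a1, b1) (insert (l, a2, b2) (Y - {(l, a1, b2), (l, a2, b1)}))"
      have "rearrangement Y2 Y0"
        unfolding Y2_def using rearrangement_exchange[OF rc t1 t2] a2 b2 by simp
      moreover have "(l, a1, b1) \<in> Y2" by (simp add: Y2_def)
      ultimately have "sum level_sq Y2 \<le> sum level_sq Y0" using common by blast
      moreover have "sum level_sq Y < sum level_sq Y2"
        unfolding Y2_def by (rule rearrangement_exchange_sum_less[OF rc t1 t2 a2 b2])
      ultimately show ?thesis by simp
    qed
  qed
qed

section \<open>Independence of the standard monomials\<close>

text \<open>The factors of \<open>x\<^sup>\<nu>\<close> are indexed by the pairs \<open>(n, j)\<close>, \<open>j < \<nu>\<^sub>n\<close>. Expanding
  the factor \<open>\<omega>\<^sup>(\<^sup>n\<^sup>)\<close>, a choice \<open>(l, a)\<close> of one of its terms turns it into the triple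
  \<open>(l, a, n - a)\<close>.\<close>

definition triple_supp :: "triple \<Rightarrow> gidx set" where "triple_supp t = {xi (fst t) (fst (snd t)), eta (fst t) (snd (snd t))}"
definition ev_triple :: "triple \<Rightarrow> 'k::comm_ring_1 ev_grass" where "ev_triple t = ev_pair (fst t) (fst (snd t)) (snd (snd t))"
definition exp_factors :: "(nat \<Rightarrow>\<^sub>0 nat) \<Rightarrow> (nat \<times> nat) set" where
  "exp_factors \<nu> = Sigma (Poly_Mapping.keys \<nu>) (\<lambda>n. {..<Poly_Mapping.lookup \<nu> n})"
definition choices :: "nat \<Rightarrow> nat \<Rightarrow> (nat \<times> nat) set" where "choices m n = {..<m - 1} \<times> {..n}"
definition choice_triple :: "nat \<times> nat \<Rightarrow> nat \<times> nat \<Rightarrow> triple" where "choice_triple x c = (fst c, snd c, fst x - snd c)"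
definition choice_coeff :: "(nat \<times> nat) set \<Rightarrow> (nat \<times> nat \<Rightarrow> nat \<times> nat) \<Rightarrow> nat" where
  "choice_coeff A g = (\<Prod>x\<in>A. (fst x choose snd (g x)))"

lemma finite_exp_factors[simp]: "finite (exp_factors \<nu>)" by (simp add: exp_factors_def)
lemma finite_choices[simp]: "finite (choices m n)" by (simp add: choices_def)

lemma omega_deriv_choices: "omega_deriv m n = (\<Sum>c\<in>choices m n. of_nat (n choose snd c) * ev_triple (choice_triple x c)) " if "fst x = n"
  using that by (simp add: omega_deriv_def choices_def ev_triple_def choice_triple_def sum.cartesian_product case_prod_beta)

lemma omega_monom_exp_factors: "omega_monom m \<nu> = (\<Prod>x\<in>exp_factors \<nu>. omega_deriv m (fst x))"
proof -
  have "omega_monom m \<nu> = (\<Prod>n\<in>Poly_Mapping.keys \<nu>. \<Prod>j\<in>{..<Poly_Mapping.lookup \<nu> n}. omega_deriv m n)"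
    by (simp add: omega_monom_def)
  also have "\<dots> = (\<Prod>x\<in>exp_factors \<nu>. omega_deriv m (fst x))"
    unfolding exp_factors_def by (subst prod.Sigma) (auto simp: case_prod_beta)
  finally show ?thesis .
qed

lemma omega_monom_expand:
  "omega_monom m \<nu> = (\<Sum>g\<in>PiE (exp_factors \<nu>) (\<lambda>x. choices m (fst x)).
     of_nat (choice_coeff (exp_factors \<nu>) g) * (\<Prod>x\<in>exp_factors \<nu>. ev_triple (choice_triple x (g x)) :: 'k::comm_ring_1 ev_grass))"
proof -
  have "omega_monom m \<nu> = (\<Prod>x\<in>exp_factors \<nu>. \<Sum>c\<in>choices m (fst x). of_nat (fst x choose snd c) * (ev_triple (choice_triple x c) :: 'k ev_grass))"
    unfolding omega_monom_exp_factors by (rule prod.cong[OF refl]) (rule omega_deriv_choices, rule refl)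
  also have "\<dots> = (\<Sum>g\<in>PiE (exp_factors \<nu>) (\<lambda>x. choices m (fst x)).
      \<Prod>x\<in>exp_factors \<nu>. of_nat (fst x choose snd (g x)) * (ev_triple (choice_triple x (g x)) :: 'k ev_grass))"
    by (rule prod_sum_PiE) simp_all
  also have "\<dots> = (\<Sum>g\<in>PiE (exp_factors \<nu>) (\<lambda>x. choices m (fst x)).
      of_nat (choice_coeff (exp_factors \<nu>) g) * (\<Prod>x\<in>exp_factors \<nu>. ev_triple (choice_triple x (g x)) :: 'k ev_grass))"
    by (simp add: prod.distrib choice_coeff_def of_nat_prod)
  finally show ?thesis .
qed

lemma keys_ev_triple: "Poly_Mapping.keys (rep_ev (ev_triple t :: 'k::comm_ring_1 ev_grass)) \<subseteq> {triple_supp t}"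
  using keys_ext_term[of "1::'k" "[xi (fst t) (fst (snd t)), eta (fst t) (snd (snd t))]"]
  by (auto simp: ev_triple_def ev_pair.rep_eq triple_supp_def split: if_splits)

lemma keys_prod_ev_triple:
  assumes "finite A"
  shows "S \<in> Poly_Mapping.keys (rep_ev (\<Prod>x\<in>A. ev_triple (t x) :: 'k::comm_ring_1 ev_grass)) \<Longrightarrow>
     S = (\<Union>x\<in>A. triple_supp (t x)) \<and> (\<forall>x\<in>A. \<forall>y\<in>A. x \<noteq> y \<longrightarrow> triple_supp (t x) \<inter> triple_supp (t y) = {})"
  using assms
proof (induction A arbitrary: S rule: finite_induct)
  case empty
  then show ?case by (simp add: one_ev_grass.rep_eq split: if_splits)
next
  case (insert x A)
  have "S \<in> Poly_Mapping.keys (wedge (rep_ev (ev_triple (t x) :: 'k ev_grass)) (rep_ev (\<Prod>x\<in>A. ev_triple (t x) :: 'k ev_grass)))"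
    using insert by (simp add: times_ev_grass.rep_eq)
  then obtain S1 S2 where s: "S = S1 \<union> S2" "S1 \<in> Poly_Mapping.keys (rep_ev (ev_triple (t x) :: 'k ev_grass))"
    "S2 \<in> Poly_Mapping.keys (rep_ev (\<Prod>x\<in>A. ev_triple (t x) :: 'k ev_grass))" "S1 \<inter> S2 = {}"
    by (rule keys_wedgeE[OF finite_monoms_rep_ev finite_monoms_rep_ev])
  have S1: "S1 = triple_supp (t x)" using s(2) keys_ev_triple by blast
  note ih = insert.IH[OF s(3)]
  have d: "triple_supp (t x) \<inter> triple_supp (t y) = {}" if "y \<in> A" for y using s(4) S1 ih that by blast
  show ?case
  proof
    show "S = (\<Union>x\<in>insert x A. triple_supp (t x))" using s(1) S1 ih by simp
    show "\<forall>xa\<in>insert x A. \<forall>y\<in>insert x A. xa \<noteq> y \<longrightarrow> triple_supp (t xa) \<inter> triple_supp (t y) = {}"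
      using ih d by blast
  qed
qed

lemma neg_one_pow_cases: "(-1::'k::comm_ring_1) ^ n = 1 \<or> (-1::'k) ^ n = -1"
  by (induction n) auto

lemma prod_ev_triple_disjoint:
  assumes "finite A" "\<forall>x\<in>A. \<forall>y\<in>A. x \<noteq> y \<longrightarrow> triple_supp (t x) \<inter> triple_supp (t y) = {}"
  shows "\<exists>e. (e = 1 \<or> e = -1) \<and> rep_ev (\<Prod>x\<in>A. ev_triple (t x) :: 'k::comm_ring_1 ev_grass) = Poly_Mapping.single (\<Union>x\<in>A. triple_supp (t x)) e"
  using assms
proof (induction A rule: finite_induct)
  case empty then show ?case by (auto simp: one_ev_grass.rep_eq)
next
  case (insert x A)
  then obtain e where e: "e = 1 \<or> e = -1" "rep_ev (\<Prod>x\<in>A. ev_triple (t x) :: 'k ev_grass) = Poly_Mapping.single (\<Union>x\<in>A. triple_supp (t x)) e"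
    by blast
  define S where "S = (\<Union>x\<in>A. triple_supp (t x))"
  have fS: "finite S" using insert(1) by (simp add: S_def triple_supp_def)
  define L where "L = [xi (fst (t x)) (fst (snd (t x))), eta (fst (t x)) (snd (snd (t x)))]"
  have sL: "set L = triple_supp (t x)" by (simp add: L_def triple_supp_def)
  have disj: "triple_supp (t x) \<inter> S = {}" using insert.prems insert(2) by (auto simp: S_def)
  have dL: "distinct (L @ sorted_list_of_set S)" using disj fS sL by (auto simp: L_def xi_def eta_def)
  have "rep_ev (\<Prod>x\<in>insert x A. ev_triple (t x) :: 'k ev_grass) = wedge (ext_term 1 L) (ext_term e (sorted_list_of_set S))"
    using insert(1,2) e(2) ext_term_sorted[OF fS, of e] by (simp add: times_ev_grass.rep_eq ev_triple_def ev_pair.rep_eq L_def S_def)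
  also have "\<dots> = Poly_Mapping.single (triple_supp (t x) \<union> S) (e * perm_sign (L @ sorted_list_of_set S))"
    by (simp only: wedge_ext mult_1_left ext_term_distinct[OF dL]) (simp add: sL fS)
  finally show ?case using e(1) neg_one_pow_cases[of "inversions (L @ sorted_list_of_set S)"]
    by (auto simp: perm_sign_inversions S_def intro!: exI[of _ "e * perm_sign (L @ sorted_list_of_set S)"])
qed

text \<open>The standard choice lists the factors of \<open>x\<^sup>\<mu>\<close> by increasing \<open>n\<close>, gives the factor
  at position \<open>p\<close> the colour \<open>p mod (m - 1)\<close> and splits \<open>n\<close> into halves. For standard
  \<open>\<mu>\<close> at most \<open>m - 1\<close> factors have indices in any \<open>{c, c + 1}\<close>, so factors whose
  halves could collide receive different colours.\<close>

definition prefix_count :: "(nat \<Rightarrow>\<^sub>0 nat) \<Rightarrow> nat \<Rightarrow> nat" where "prefix_count \<mu> n = (\<Sum>i<n. Poly_Mapping.lookup \<mu> i)"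
definition factor_pos :: "(nat \<Rightarrow>\<^sub>0 nat) \<Rightarrow> nat \<times> nat \<Rightarrow> nat" where "factor_pos \<mu> x = prefix_count \<mu> (fst x) + snd x"
definition std_choice :: "nat \<Rightarrow> (nat \<Rightarrow>\<^sub>0 nat) \<Rightarrow> nat \<times> nat \<Rightarrow> nat \<times> nat" where
  "std_choice m \<mu> x = (factor_pos \<mu> x mod (m - 1), fst x div 2)"
definition std_triple :: "nat \<Rightarrow> (nat \<Rightarrow>\<^sub>0 nat) \<Rightarrow> nat \<times> nat \<Rightarrow> triple" where
  "std_triple m \<mu> x = choice_triple x (std_choice m \<mu> x)"

lemma std_triple_eq: "std_triple m \<mu> x = (factor_pos \<mu> x mod (m - 1), fst x div 2, fst x - fst x div 2)"
  by (simp add: std_triple_def std_choice_def choice_triple_def)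

lemma prefix_count_Suc: "prefix_count \<mu> (Suc n) = prefix_count \<mu> n + Poly_Mapping.lookup \<mu> n" by (simp add: prefix_count_def)

lemma prefix_count_mono: "n \<le> n' \<Longrightarrow> prefix_count \<mu> n \<le> prefix_count \<mu> n'"
  unfolding prefix_count_def by (rule sum_mono2) auto

lemma exp_factors_iff: "x \<in> exp_factors \<mu> \<longleftrightarrow> snd x < Poly_Mapping.lookup \<mu> (fst x)"
  by (cases x) (auto simp: exp_factors_def in_keys_iff)

lemma factor_pos_less:
  assumes "x \<in> exp_factors \<mu>" "y \<in> exp_factors \<mu>" "fst x < fst y"
  shows "factor_pos \<mu> x < factor_pos \<mu> y"
proof -
  have "factor_pos \<mu> x < prefix_count \<mu> (Suc (fst x))" using assms(1) by (simp add: factor_pos_def prefix_count_Suc exp_factors_iff)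
  also have "\<dots> \<le> prefix_count \<mu> (fst y)" using assms(3) by (intro prefix_count_mono) simp
  also have "\<dots> \<le> factor_pos \<mu> y" by (simp add: factor_pos_def)
  finally show ?thesis .
qed

lemma factor_pos_inj:
  assumes "x \<in> exp_factors \<mu>" "y \<in> exp_factors \<mu>" "factor_pos \<mu> x = factor_pos \<mu> y"
  shows "x = y"
proof (cases "fst x = fst y")
  case True then show ?thesis using assms(3) by (cases x, cases y) (simp add: factor_pos_def)
next
  case False
  then have "fst x < fst y \<or> fst y < fst x" by arith
  then show ?thesis using factor_pos_less[OF assms(1,2)] factor_pos_less[OF assms(2,1)] assms(3) by auto
qed

lemma mod_window:
  fixes a b p k :: nat
  assumes "a \<noteq> b" "p \<le> a" "a < p + k" "p \<le> b" "b < p + k"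
  shows "a mod k \<noteq> b mod k"
proof
  assume eq: "a mod k = b mod k"
  show False
  proof (cases "a < b")
    case True
    then have "k dvd b - a" using eq mod_eq_dvd_iff_nat[of a b k] by simp
    moreover have "0 < b - a" using True by simp
    ultimately have "k \<le> b - a" by (rule dvd_imp_le)
    then show False using assms by arith
  next
    case False
    then have "b < a" using assms(1) by simp
    then have "k dvd a - b" using eq mod_eq_dvd_iff_nat[of b a k] by simp
    moreover have "0 < a - b" using \<open>b < a\<close> by simp
    ultimately have "k \<le> a - b" by (rule dvd_imp_le)
    then show False using assms by arith
  qed
qed

lemma factor_pos_window:
  assumes "x \<in> exp_factors \<mu>" "fst x = c \<or> fst x = Suc c"
  shows "prefix_count \<mu> c \<le> factor_pos \<mu> x \<and> factor_pos \<mu> x < prefix_count \<mu> c + (Poly_Mapping.lookup \<mu> c + Poly_Mapping.lookup \<mu> (Suc c))"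
  using assms by (auto simp: factor_pos_def prefix_count_Suc exp_factors_iff)

lemma factor_pos_mod_distinct:
  assumes m: "2 \<le> m" and st: "standard_exp m \<mu>"
    and x: "x \<in> exp_factors \<mu>" and y: "y \<in> exp_factors \<mu>" and ne: "x \<noteq> y"
    and cx: "fst x = c \<or> fst x = Suc c" and cy: "fst y = c \<or> fst y = Suc c"
  shows "factor_pos \<mu> x mod (m - 1) \<noteq> factor_pos \<mu> y mod (m - 1)"
proof -
  have w: "Poly_Mapping.lookup \<mu> c + Poly_Mapping.lookup \<mu> (Suc c) \<le> m - 1"
    using st m unfolding standard_exp_def by (metis Suc_pred' less_Suc_eq_le not_numeral_le_zero not_gr_zero)
  have "factor_pos \<mu> x \<noteq> factor_pos \<mu> y" using factor_pos_inj[OF x y] ne by blast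
  then show ?thesis using factor_pos_window[OF x cx] factor_pos_window[OF y cy] w
    by (intro mod_window) auto
qed

lemma triple_supp_inter:
  "triple_supp (l, a, b) \<inter> triple_supp (l', a', b') \<noteq> {} \<longleftrightarrow> (l = l' \<and> a = a') \<or> (l = l' \<and> b = b')"
  by (auto simp: triple_supp_def xi_def eta_def)

lemma std_triple_disjoint:
  assumes m: "2 \<le> m" and st: "standard_exp m \<mu>"
    and x: "x \<in> exp_factors \<mu>" and y: "y \<in> exp_factors \<mu>" and ne: "x \<noteq> y"
  shows "triple_supp (std_triple m \<mu> x) \<inter> triple_supp (std_triple m \<mu> y) = {}"
proof (rule ccontr)
  assume "triple_supp (std_triple m \<mu> x) \<inter> triple_supp (std_triple m \<mu> y) \<noteq> {}"
  then have h: "factor_pos \<mu> x mod (m - 1) = factor_pos \<mu> y mod (m - 1)"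
    "fst x div 2 = fst y div 2 \<or> fst x - fst x div 2 = fst y - fst y div 2"
    unfolding std_triple_eq triple_supp_inter by auto
  define c where "c = min (fst x) (fst y)"
  have "fst x = c \<or> fst x = Suc c" "fst y = c \<or> fst y = Suc c"
    using h(2) unfolding c_def by arith+
  then show False using factor_pos_mod_distinct[OF m st x y ne] h(1) by blast
qed

lemma triple_supp_nonempty: "triple_supp t \<noteq> {}" by (simp add: triple_supp_def)

lemma disjoint_supp_inj:
  assumes "\<forall>x\<in>A. \<forall>y\<in>A. x \<noteq> y \<longrightarrow> triple_supp (t x) \<inter> triple_supp (t y) = {}"
  shows "inj_on t A"
  using assms triple_supp_nonempty by (metis inf.idem inj_onI)

lemma disjoint_supp_inj_xi:
  assumes "\<forall>x\<in>A. \<forall>y\<in>A. x \<noteq> y \<longrightarrow> triple_supp (t x) \<inter> triple_supp (t y) = {}"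
  shows "inj_on xi_index (t ` A)"
proof (rule inj_onI)
  fix u v assume "u \<in> t ` A" "v \<in> t ` A" "xi_index u = xi_index v"
  then obtain x y where "x \<in> A" "y \<in> A" "u = t x" "v = t y" by blast
  moreover have "triple_supp u \<inter> triple_supp v \<noteq> {}" using \<open>xi_index u = xi_index v\<close>
    by (cases u, cases v) (simp add: triple_supp_inter xi_index_def)
  ultimately show "u = v" using assms by metis
qed

lemma disjoint_supp_inj_eta:
  assumes "\<forall>x\<in>A. \<forall>y\<in>A. x \<noteq> y \<longrightarrow> triple_supp (t x) \<inter> triple_supp (t y) = {}"
  shows "inj_on eta_index (t ` A)"
proof (rule inj_onI)
  fix u v assume "u \<in> t ` A" "v \<in> t ` A" "eta_index u = eta_index v"
  then obtain x y where "x \<in> A" "y \<in> A" "u = t x" "v = t y" by blast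
  moreover have "triple_supp u \<inter> triple_supp v \<noteq> {}" using \<open>eta_index u = eta_index v\<close>
    by (cases u, cases v) (simp add: triple_supp_inter eta_index_def)
  ultimately show "u = v" using assms by metis
qed

lemma xi_index_image: "xi_index ` (t ` A) = {(l, a). xi l a \<in> (\<Union>x\<in>A. triple_supp (t x))}"
  by (auto simp: xi_index_def triple_supp_def xi_def eta_def image_iff)

lemma eta_index_image: "eta_index ` (t ` A) = {(l, b). eta l b \<in> (\<Union>x\<in>A. triple_supp (t x))}"
  by (auto simp: eta_index_def triple_supp_def xi_def eta_def image_iff)

lemma sq_weight_exp_factors: "sq_weight \<nu> = (\<Sum>x\<in>exp_factors \<nu>. fst x * fst x)"
proof -
  have "(\<Sum>x\<in>exp_factors \<nu>. fst x * fst x) = (\<Sum>n\<in>Poly_Mapping.keys \<nu>. \<Sum>j<Poly_Mapping.lookup \<nu> n. n * n)"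
    unfolding exp_factors_def by (subst sum.Sigma) (auto simp: case_prod_beta)
  also have "\<dots> = sq_weight \<nu>" by (simp add: lin_weight_def)
  finally show ?thesis by simp
qed

lemma card_exp_factors_level: "card {x\<in>exp_factors \<nu>. fst x = n} = Poly_Mapping.lookup \<nu> n"
proof -
  have "{x\<in>exp_factors \<nu>. fst x = n} = {n} \<times> {..<Poly_Mapping.lookup \<nu> n}"
    by (auto simp: exp_factors_iff)
  then show ?thesis by (simp add: card_cartesian_product)
qed

lemma exp_eq_from_triples:
  assumes "inj_on t (exp_factors \<nu>)" "inj_on t' (exp_factors \<mu>)" "t ` exp_factors \<nu> = t' ` exp_factors \<mu>"
    "\<And>x. x \<in> exp_factors \<nu> \<Longrightarrow> level (t x) = fst x" "\<And>x. x \<in> exp_factors \<mu> \<Longrightarrow> level (t' x) = fst x"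
  shows "\<nu> = \<mu>"
proof (rule poly_mapping_eqI)
  fix n
  have "Poly_Mapping.lookup \<nu> n = card (t ` {x\<in>exp_factors \<nu>. fst x = n})"
    using card_exp_factors_level[of \<nu> n] card_image[OF inj_on_subset[OF assms(1)], of "{x\<in>exp_factors \<nu>. fst x = n}"] by auto
  also have "t ` {x\<in>exp_factors \<nu>. fst x = n} = {u \<in> t ` exp_factors \<nu>. level u = n}" using assms(4) by auto
  also have "\<dots> = {u \<in> t' ` exp_factors \<mu>. level u = n}" using assms(3) by simp
  also have "\<dots> = t' ` {x\<in>exp_factors \<mu>. fst x = n}" using assms(5) by auto
  also have "card \<dots> = Poly_Mapping.lookup \<mu> n"
    using card_exp_factors_level[of \<mu> n] card_image[OF inj_on_subset[OF assms(2)], of "{x\<in>exp_factors \<mu>. fst x = n}"] by auto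
  finally show "Poly_Mapping.lookup \<nu> n = Poly_Mapping.lookup \<mu> n" .
qed

definition std_supp :: "nat \<Rightarrow> (nat \<Rightarrow>\<^sub>0 nat) \<Rightarrow> gidx set" where
  "std_supp m \<mu> = (\<Union>x\<in>exp_factors \<mu>. triple_supp (std_triple m \<mu> x))"

lemma level_choice_triple: "snd c \<le> fst x \<Longrightarrow> level (choice_triple x c) = fst x"
  by (simp add: choice_triple_def level_def)

lemma sum_level_sq_image:
  assumes "inj_on t (exp_factors \<nu>)" "\<And>x. x \<in> exp_factors \<nu> \<Longrightarrow> level (t x) = fst x"
  shows "sum level_sq (t ` exp_factors \<nu>) = sq_weight \<nu>"
  using assms by (simp add: sum.reindex level_sq_def sq_weight_exp_factors)

lemma choices_le: "c \<in> choices m n \<Longrightarrow> snd c \<le> n" by (auto simp: choices_def)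

lemma increasing_std_triples:
  assumes m: "2 \<le> m" and st: "standard_exp m \<mu>"
  shows "increasing_triples (std_triple m \<mu> ` exp_factors \<mu>)"
  unfolding increasing_triples_def
proof (intro allI impI)
  fix l a b a' b'
  assume "(l, a, b) \<in> std_triple m \<mu> ` exp_factors \<mu>" "(l, a', b') \<in> std_triple m \<mu> ` exp_factors \<mu>" and aa: "a < a'"
  then obtain x y where x: "x \<in> exp_factors \<mu>" "std_triple m \<mu> x = (l, a, b)" and y: "y \<in> exp_factors \<mu>" "std_triple m \<mu> y = (l, a', b')" by auto
  have ab: "a = fst x div 2" "b = fst x - fst x div 2" "a' = fst y div 2" "b' = fst y - fst y div 2"
    using x(2) y(2) by (auto simp: std_triple_eq)
  have "fst x < fst y" using aa ab by (metis div_le_mono not_le)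
  then have le: "b \<le> b'" using ab by arith
  have "b \<noteq> b'"
  proof
    assume "b = b'"
    then have "triple_supp (std_triple m \<mu> x) \<inter> triple_supp (std_triple m \<mu> y) \<noteq> {}" using x(2) y(2) by (simp add: triple_supp_inter)
    then have "x = y" using std_triple_disjoint[OF m st x(1) y(1)] by blast
    then show False using x(2) y(2) aa by simp
  qed
  then show "b < b'" using le by simp
qed

lemma inj_on_std_triple: "2 \<le> m \<Longrightarrow> standard_exp m \<mu> \<Longrightarrow> inj_on (std_triple m \<mu>) (exp_factors \<mu>)"
  using std_triple_disjoint by (intro disjoint_supp_inj) blast

lemma rearrangement_std_triples:
  assumes m: "2 \<le> m" and st: "standard_exp m \<mu>" and "finite A"
    and supp: "std_supp m \<mu> = (\<Union>x\<in>A. triple_supp (t x))"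
    and disj: "\<forall>x\<in>A. \<forall>y\<in>A. x \<noteq> y \<longrightarrow> triple_supp (t x) \<inter> triple_supp (t y) = {}"
  shows "rearrangement (t ` A) (std_triple m \<mu> ` exp_factors \<mu>)"
  unfolding rearrangement_def
proof (intro conjI)
  have d0: "\<forall>x\<in>exp_factors \<mu>. \<forall>y\<in>exp_factors \<mu>. x \<noteq> y \<longrightarrow>
      triple_supp (std_triple m \<mu> x) \<inter> triple_supp (std_triple m \<mu> y) = {}"
    using std_triple_disjoint[OF m st] by blast
  show "xi_index ` t ` A = xi_index ` std_triple m \<mu> ` exp_factors \<mu>"
    unfolding xi_index_image using supp by (simp add: std_supp_def)
  show "eta_index ` t ` A = eta_index ` std_triple m \<mu> ` exp_factors \<mu>"
    unfolding eta_index_image using supp by (simp add: std_supp_def)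
  show "inj_on xi_index (t ` A)" "inj_on eta_index (t ` A)"
    using disj by (rule disjoint_supp_inj_xi, rule disjoint_supp_inj_eta)
  show "inj_on xi_index (std_triple m \<mu> ` exp_factors \<mu>)" "inj_on eta_index (std_triple m \<mu> ` exp_factors \<mu>)"
    using d0 by (rule disjoint_supp_inj_xi, rule disjoint_supp_inj_eta)
  show "increasing_triples (std_triple m \<mu> ` exp_factors \<mu>)" by (rule increasing_std_triples[OF m st])
qed (simp_all add: assms(3))

lemma std_supp_in_expansion:
  fixes g :: "nat \<times> nat \<Rightarrow> nat \<times> nat"
  assumes m: "2 \<le> m" and st: "standard_exp m \<mu>" and g: "g \<in> PiE (exp_factors \<nu>) (\<lambda>x. choices m (fst x))"
    and T: "std_supp m \<mu> \<in> Poly_Mapping.keys (rep_ev (\<Prod>x\<in>exp_factors \<nu>. ev_triple (choice_triple x (g x)) :: 'k::comm_ring_1 ev_grass))"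
  shows "sq_weight \<nu> \<le> sq_weight \<mu> \<and> (sq_weight \<nu> = sq_weight \<mu> \<longrightarrow> \<nu> = \<mu> \<and>
    inj_on (\<lambda>x. choice_triple x (g x)) (exp_factors \<nu>) \<and>
    (\<lambda>x. choice_triple x (g x)) ` exp_factors \<nu> = std_triple m \<mu> ` exp_factors \<mu>)"
proof -
  define t where "t x = choice_triple x (g x)" for x
  have supp: "std_supp m \<mu> = (\<Union>x\<in>exp_factors \<nu>. triple_supp (t x))"
    and disj: "\<forall>x\<in>exp_factors \<nu>. \<forall>y\<in>exp_factors \<nu>. x \<noteq> y \<longrightarrow> triple_supp (t x) \<inter> triple_supp (t y) = {}"
    using keys_prod_ev_triple[OF finite_exp_factors T] unfolding t_def by blast+
  have injt: "inj_on t (exp_factors \<nu>)" using disj by (rule disjoint_supp_inj)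
  have injt0: "inj_on (std_triple m \<mu>) (exp_factors \<mu>)" using m st by (rule inj_on_std_triple)
  have level_t: "level (t x) = fst x" if "x \<in> exp_factors \<nu>" for x
    using choices_le[OF PiE_mem[OF g that]] by (simp add: t_def level_choice_triple)
  have level_t0: "level (std_triple m \<mu> x) = fst x" for x
    by (simp add: std_triple_def std_choice_def level_choice_triple)
  have R: "sq_weight \<nu> \<le> sq_weight \<mu> \<and> (sq_weight \<nu> = sq_weight \<mu> \<longrightarrow> t ` exp_factors \<nu> = std_triple m \<mu> ` exp_factors \<mu>)"
    using rearrangement_inequality[OF rearrangement_std_triples[OF m st finite_exp_factors supp disj]]
    by (simp add: sum_level_sq_image[OF injt level_t] sum_level_sq_image[OF injt0 level_t0])
  show ?thesis
  proof (intro conjI impI)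
    show "sq_weight \<nu> \<le> sq_weight \<mu>" using R by simp
    assume "sq_weight \<nu> = sq_weight \<mu>"
    then have im: "t ` exp_factors \<nu> = std_triple m \<mu> ` exp_factors \<mu>" using R by simp
    show "\<nu> = \<mu>" by (rule exp_eq_from_triples[OF injt injt0 im level_t level_t0])
    show "inj_on (\<lambda>x. choice_triple x (g x)) (exp_factors \<nu>)" using injt by (simp add: t_def[abs_def])
    show "(\<lambda>x. choice_triple x (g x)) ` exp_factors \<nu> = std_triple m \<mu> ` exp_factors \<mu>" using im by (simp add: t_def[abs_def])
  qed
qed

lemma lookup_rep_of_nat_mult: "Poly_Mapping.lookup (rep_ev (of_nat c * X :: 'k::comm_ring_1 ev_grass)) T = of_nat c * Poly_Mapping.lookup (rep_ev X) T"
  by (simp add: of_nat_ev_grass rep_ev_const_mult lookup_gscal)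

lemma lookup_omega_monom: "Poly_Mapping.lookup (rep_ev (omega_monom m \<nu> :: 'k::comm_ring_1 ev_grass)) T =
  (\<Sum>g\<in>PiE (exp_factors \<nu>) (\<lambda>x. choices m (fst x)).
   of_nat (choice_coeff (exp_factors \<nu>) g) * Poly_Mapping.lookup (rep_ev (\<Prod>x\<in>exp_factors \<nu>. ev_triple (choice_triple x (g x)) :: 'k ev_grass)) T)"
  by (simp add: omega_monom_expand rep_ev_sum lookup_sum lookup_rep_of_nat_mult)

lemma std_supp_coeff_zero:
  assumes m: "2 \<le> m" and st: "standard_exp m \<mu>" and ne: "\<nu> \<noteq> \<mu>" and le: "sq_weight \<mu> \<le> sq_weight \<nu>"
  shows "Poly_Mapping.lookup (rep_ev (omega_monom m \<nu> :: 'k::comm_ring_1 ev_grass)) (std_supp m \<mu>) = 0"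
  unfolding lookup_omega_monom
proof (rule sum.neutral, rule ballI)
  fix g assume g: "g \<in> PiE (exp_factors \<nu>) (\<lambda>x. choices m (fst x))"
  have "Poly_Mapping.lookup (rep_ev (\<Prod>x\<in>exp_factors \<nu>. ev_triple (choice_triple x (g x)) :: 'k ev_grass)) (std_supp m \<mu>) = 0"
  proof (rule ccontr)
    assume "Poly_Mapping.lookup (rep_ev (\<Prod>x\<in>exp_factors \<nu>. ev_triple (choice_triple x (g x)) :: 'k ev_grass)) (std_supp m \<mu>) \<noteq> 0"
    then have "std_supp m \<mu> \<in> Poly_Mapping.keys (rep_ev (\<Prod>x\<in>exp_factors \<nu>. ev_triple (choice_triple x (g x)) :: 'k ev_grass))" by (simp add: in_keys_iff)
    from std_supp_in_expansion[OF m st g this] le ne show False by simp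
  qed
  then show "of_nat (choice_coeff (exp_factors \<nu>) g) * Poly_Mapping.lookup (rep_ev (\<Prod>x\<in>exp_factors \<nu>. ev_triple (choice_triple x (g x)) :: 'k ev_grass)) (std_supp m \<mu>)
      = 0"
    by simp
qed


lemma prod_ev_triple_choice_coeff:
  assumes m: "2 \<le> m" and st: "standard_exp m \<mu>" and g: "g \<in> PiE (exp_factors \<mu>) (\<lambda>x. choices m (fst x))"
    and W: "rep_ev (\<Prod>x\<in>exp_factors \<mu>. ev_triple (std_triple m \<mu> x) :: 'k::comm_ring_1 ev_grass) =
      Poly_Mapping.single (std_supp m \<mu>) e"
  shows "Poly_Mapping.lookup (rep_ev (\<Prod>x\<in>exp_factors \<mu>. ev_triple (choice_triple x (g x)) :: 'k ev_grass))
    (std_supp m \<mu>) \<in> {0, e}"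
proof (cases "std_supp m \<mu> \<in> Poly_Mapping.keys (rep_ev (\<Prod>x\<in>exp_factors \<mu>. ev_triple (choice_triple x (g x)) :: 'k ev_grass))")
  case True
  have k: "inj_on (\<lambda>x. choice_triple x (g x)) (exp_factors \<mu>)"
    "(\<lambda>x. choice_triple x (g x)) ` exp_factors \<mu> = std_triple m \<mu> ` exp_factors \<mu>"
    using std_supp_in_expansion[OF m st g True] by simp_all
  have "(\<Prod>x\<in>exp_factors \<mu>. ev_triple (choice_triple x (g x)) :: 'k ev_grass) =
      (\<Prod>u\<in>(\<lambda>x. choice_triple x (g x)) ` exp_factors \<mu>. ev_triple u)"
    by (simp add: prod.reindex[OF k(1)] o_def)
  also have "\<dots> = (\<Prod>x\<in>exp_factors \<mu>. ev_triple (std_triple m \<mu> x))"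
    unfolding k(2) by (simp add: prod.reindex[OF inj_on_std_triple[OF m st]] o_def)
  finally show ?thesis using W by simp
next
  case False
  then show ?thesis by (simp add: in_keys_iff)
qed

lemma std_supp_coeff_nonzero:
  assumes m: "2 \<le> m" and st: "standard_exp m \<mu>"
  shows "Poly_Mapping.lookup (rep_ev (omega_monom m \<mu> :: 'k::field_char_0 ev_grass)) (std_supp m \<mu>) \<noteq> 0"
proof -
  define G where "G = PiE (exp_factors \<mu>) (\<lambda>x. choices m (fst x))"
  define v where "v g = Poly_Mapping.lookup (rep_ev (\<Prod>x\<in>exp_factors \<mu>. ev_triple (choice_triple x (g x)) :: 'k ev_grass))
    (std_supp m \<mu>)" for g
  define cf where "cf g = choice_coeff (exp_factors \<mu>) g" for g
  have "\<forall>x\<in>exp_factors \<mu>. \<forall>y\<in>exp_factors \<mu>. x \<noteq> y \<longrightarrow>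
      triple_supp (std_triple m \<mu> x) \<inter> triple_supp (std_triple m \<mu> y) = {}"
    using std_triple_disjoint[OF m st] by blast
  then have "\<exists>e. (e = 1 \<or> e = -1) \<and>
      rep_ev (\<Prod>x\<in>exp_factors \<mu>. ev_triple (std_triple m \<mu> x) :: 'k ev_grass) = Poly_Mapping.single (std_supp m \<mu>) e"
    unfolding std_supp_def by (rule prod_ev_triple_disjoint[OF finite_exp_factors])
  then obtain e :: 'k where e: "e = 1 \<or> e = -1"
    "rep_ev (\<Prod>x\<in>exp_factors \<mu>. ev_triple (std_triple m \<mu> x) :: 'k ev_grass) = Poly_Mapping.single (std_supp m \<mu>) e"
    by blast
  define Good where "Good = {g\<in>G. v g = e}"
  have fG: "finite G" by (simp add: G_def finite_PiE)
  have val: "v g = (if g \<in> Good then e else 0)" if "g \<in> G" for g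
  proof -
    have "v g \<in> {0, e}" unfolding v_def using prod_ev_triple_choice_coeff[OF m st that[unfolded G_def] e(2)] .
    then show ?thesis using that unfolding Good_def by auto
  qed
  have vGood: "v g = e" if "g \<in> Good" for g using that by (simp add: Good_def)
  define g0 where "g0 = restrict (std_choice m \<mu>) (exp_factors \<mu>)"
  have "g0 \<in> G" unfolding G_def g0_def using m by (auto simp: choices_def std_choice_def)
  moreover have "v g0 = e"
  proof -
    have "(\<Prod>x\<in>exp_factors \<mu>. ev_triple (choice_triple x (g0 x)) :: 'k ev_grass) =
        (\<Prod>x\<in>exp_factors \<mu>. ev_triple (std_triple m \<mu> x))"
      unfolding g0_def by (rule prod.cong) (simp_all add: std_triple_def)
    then show ?thesis unfolding v_def using e(2) by simp
  qed
  ultimately have g0: "g0 \<in> Good" by (simp add: Good_def)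
  have "0 < cf g0" unfolding cf_def choice_coeff_def g0_def by (intro prod_pos) (simp add: std_choice_def)
  also have "cf g0 \<le> (\<Sum>g\<in>Good. cf g)" by (rule member_le_sum[OF g0]) (simp_all add: fG Good_def)
  finally have pos: "0 < (\<Sum>g\<in>Good. cf g)" .
  have "Poly_Mapping.lookup (rep_ev (omega_monom m \<mu> :: 'k ev_grass)) (std_supp m \<mu>) = (\<Sum>g\<in>G. of_nat (cf g) * v g)"
    by (simp add: lookup_omega_monom G_def v_def cf_def)
  also have "\<dots> = (\<Sum>g\<in>Good. of_nat (cf g) * e)"
  proof (rule sum.mono_neutral_cong_right)
    show "Good \<subseteq> G" by (auto simp: Good_def)
  qed (simp_all add: fG val vGood)
  also have "\<dots> = of_nat (\<Sum>g\<in>Good. cf g) * e" by (simp add: sum_distrib_right)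
  finally show ?thesis using pos e(1) by (auto simp del: of_nat_sum)
qed

lemma lookup_phi: "Poly_Mapping.lookup (rep_ev (phi m q :: 'k::comm_ring_1 ev_grass)) T =
   (\<Sum>\<nu>\<in>Poly_Mapping.keys q. Poly_Mapping.lookup q \<nu> * Poly_Mapping.lookup (rep_ev (omega_monom m \<nu> :: 'k ev_grass)) T)"
  by (simp add: phi_def rep_ev_sum lookup_sum rep_ev_const_mult lookup_gscal)

lemma two_le_if_standard_exp:
  assumes "standard_exp m \<mu>" "\<mu> \<noteq> 0"
  shows "2 \<le> m"
proof (rule ccontr)
  assume "\<not> 2 \<le> m"
  then have "Poly_Mapping.lookup \<mu> a = 0" for a
    using assms(1) unfolding standard_exp_def by (metis add_is_0 less_2_cases not_le not_less_zero Suc_1 less_Suc_eq)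
  then show False using assms(2) by (simp add: poly_mapping_eqI)
qed

lemma lookup_phi_std_supp:
  assumes m: "2 \<le> m" and st: "standard_exp m \<mu>" and mu: "\<mu> \<in> Poly_Mapping.keys q"
    and min: "\<And>\<nu>. \<nu> \<in> Poly_Mapping.keys q \<Longrightarrow> sq_weight \<mu> \<le> sq_weight \<nu>"
  shows "Poly_Mapping.lookup (rep_ev (phi m q :: 'k::comm_ring_1 ev_grass)) (std_supp m \<mu>) =
    Poly_Mapping.lookup q \<mu> * Poly_Mapping.lookup (rep_ev (omega_monom m \<mu> :: 'k ev_grass)) (std_supp m \<mu>)"
proof -
  have "Poly_Mapping.lookup q \<nu> * Poly_Mapping.lookup (rep_ev (omega_monom m \<nu> :: 'k ev_grass)) (std_supp m \<mu>) = 0"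
    if "\<nu> \<in> Poly_Mapping.keys q - {\<mu>}" for \<nu>
    using that min std_supp_coeff_zero[OF m st, of \<nu>, where 'k = 'k] by auto
  then show ?thesis
    unfolding lookup_phi by (subst sum.remove[OF finite_keys mu]) (simp add: sum.neutral)
qed

lemma standard_polys_phi_eq_0:
  fixes q :: "'k::field_char_0 dpoly"
  assumes qS: "q \<in> standard_polys m" and z: "phi m q = 0"
  shows "q = 0"
proof (rule ccontr)
  assume "q \<noteq> 0"
  define s where "s = Min (sq_weight ` Poly_Mapping.keys q)"
  have "s \<in> sq_weight ` Poly_Mapping.keys q" unfolding s_def using \<open>q \<noteq> 0\<close> by simp
  then obtain \<mu> where mu: "\<mu> \<in> Poly_Mapping.keys q" "sq_weight \<mu> = s" by blast
  have min: "sq_weight \<mu> \<le> sq_weight \<nu>" if "\<nu> \<in> Poly_Mapping.keys q" for \<nu>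
    using mu(2) that unfolding s_def by simp
  have st: "standard_exp m \<mu>" "\<mu> \<noteq> 0" using qS mu(1) by (auto simp: standard_polys_def)
  have m: "2 \<le> m" using st by (rule two_le_if_standard_exp)
  have "Poly_Mapping.lookup (rep_ev (phi m q :: 'k ev_grass)) (std_supp m \<mu>) \<noteq> 0"
    using lookup_phi_std_supp[OF m st(1) mu(1) min] std_supp_coeff_nonzero[OF m st(1)] mu(1)
    by (simp add: in_keys_iff)
  then show False using z by (simp add: zero_ev_grass.rep_eq)
qed

lemma ker_phi_subset_ideal:
  fixes p :: "'k::field_char_0 dpoly"
  assumes m: "0 < m" and p: "p \<in> kplus" and z: "phi m p = 0"
  shows "p \<in> diff_ideal_gen m"
proof -
  obtain q r where qr: "p = q + r" "q \<in> standard_polys m" "r \<in> diff_ideal_gen m"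
    using kplus_standard_mod_ideal[OF m p] unfolding standard_mod_ideal_def by blast
  have "phi m q = 0" using z qr(1) phi_diff_ideal_gen[OF m qr(3)] by (simp add: phi_add)
  then have "q = 0" by (rule standard_polys_phi_eq_0[OF qr(2)])
  then show ?thesis using qr by simp
qed

theorem lemma1:
  fixes m :: nat
  assumes "0 < m"
  shows "\<exists>\<phi> :: 'k::field_char_0 dpoly \<Rightarrow> 'k grass.
     (\<forall>p\<in>kplus. \<phi> p \<in> Lambda0 m)
   \<and> (\<forall>p\<in>kplus. \<forall>q\<in>kplus. \<phi> (p + q) = \<phi> p + \<phi> q)
   \<and> (\<forall>c. \<forall>p\<in>kplus. \<phi> (dscal c p) = gscal c (\<phi> p))
   \<and> (\<forall>p\<in>kplus. \<forall>q\<in>kplus. \<phi> (p * q) = wedge (\<phi> p) (\<phi> q))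
   \<and> (\<forall>p\<in>kplus. \<phi> (dderiv p) = gderiv shift (\<phi> p))
   \<and> \<phi> (dvar 0) = omega m
   \<and> (\<forall>p\<in>kplus. \<phi> p = 0 \<longleftrightarrow> p \<in> diff_ideal_gen m)"
proof (rule exI[of _ "\<lambda>p. rep_ev (phi m p :: 'k ev_grass)"], intro conjI ballI allI)
  fix p :: "'k dpoly" assume p: "p \<in> kplus"
  show "rep_ev (phi m p) \<in> Lambda0 m" using p by (rule phi_Lambda0)
  { fix q :: "'k dpoly"
    show "rep_ev (phi m (p + q)) = rep_ev (phi m p) + rep_ev (phi m q)" by (simp add: phi_add plus_ev_grass.rep_eq)
    show "rep_ev (phi m (p * q)) = wedge (rep_ev (phi m p)) (rep_ev (phi m q))" by (simp add: phi_mult times_ev_grass.rep_eq) }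
  { fix c show "rep_ev (phi m (dscal c p)) = gscal c (rep_ev (phi m p))" by (simp add: phi_dscal rep_ev_const_mult) }
  show "rep_ev (phi m (dderiv p)) = gderiv shift (rep_ev (phi m p))" by (simp add: phi_dderiv ev_deriv.rep_eq)
  show "(rep_ev (phi m p) = 0) = (p \<in> diff_ideal_gen m)"
    using ker_phi_subset_ideal[OF assms p] phi_diff_ideal_gen[OF assms, of p] by (auto simp: rep_ev_inject zero_ev_grass.rep_eq[symmetric])
next
  show "rep_ev (phi m (dvar 0) :: 'k ev_grass) = omega m" by (simp add: phi_dvar rep_omega_deriv_0)
qed

end
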